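(* Each of the following argument forms is not valid, i.e. in each item there exist formulas $\alpha,\beta,\delta$ for which the stated failure occurs: (1) $\alpha\nvDash\alpha\land\alpha$; (2) $\alpha\land\beta\nvDash\beta\land\alpha$; (3) $\alpha\land(\beta\land\delta)\nvDash(\alpha\land\beta)\land\delta$; (4) $(\alpha\land\beta)\land\delta\nvDash\alpha\land(\beta\land\delta)$; (5) $\alpha\land(\beta\lor\delta)\nvDash(\alpha\land\beta)\lor(\alpha\land\delta)$; (6) $(\alpha\land\beta)\lor(\alpha\land\delta)\nvDash\alpha\land(\beta\lor\delta)$; (7) it is not the case that $\delta\vDash\alpha$ and $\delta\vDash\beta$ always imply $\delta\vDash\alpha\land\beta$; (8) $\alpha\land\lnot\alpha\nvDash\beta$; (9) $\alpha\uplus\beta\nvDash\beta\uplus\alpha$; (10) $\alpha\uplus\beta\nvDash\alpha\lor\beta$, and $\alpha\uplus\beta\nvDash\lnot\alpha\lor\lnot\beta$.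
   Context: Hilbert spaces and states: for $n\ge1$, $\mathcal H^{(n)}=(\mathbb C^2)^{\otimes n}$ with canonical basis $|x_1,\dots,x_n\rangle$ ($x_i\in\{0,1\}$, $|0\rangle=(1,0)$, $|1\rangle=(0,1)$); $\mathfrak D(\mathcal H^{(n)})$ is the set of density operators (qumixes). A truth-perspective is a unitary $\mathfrak T$ on $\mathbb C^2$, $\mathfrak T^{(n)}=\mathfrak T^{\otimes n}$. $^{\mathfrak T}P_1^{(n)}$ (resp. $^{\mathfrak T}P_0^{(n)}$) is the projection onto the span of the $\mathfrak T^{(n)}|x_1,\dots,x_n\rangle$ with $x_n=1$ (resp. $0$). $\mathtt p_{\mathfrak T}(\rho)=\mathrm{tr}(^{\mathfrak T}P_1^{(n)}\rho)$, and $\rho\preceq_{\mathfrak T}\sigma$ iff $\mathtt p_{\mathfrak T}(\rho)\le\mathtt p_{\mathfrak T}(\sigma)$. $Red^{(j_1,\dots,j_s)}_{[n_1,\dots,n_t]}(\rho)$ is the reduced state of $\rho$ on factors $j_1,\dots,j_s$ of $\mathcal H^{(n_1)}\otimes\cdots\otimes\mathcal H^{(n_t)}$. Gates (canonical basis, extended linearly): $\mathtt{NOT}^{(n)}|x_1..x_n\rangle=|x_1..x_{n-1}\rangle\otimes|1-x_n\rangle$; $\sqrt{\mathtt I}^{(n)}|x_1..x_n\rangle=|x_1..x_{n-1}\rangle\otimes\frac1{\sqrt2}((-1)^{x_n}|x_n\rangle+|1-x_n\rangle)$; $\sqrt{\mathtt{NOT}}^{(n)}|x_1..x_n\rangle=|x_1..x_{n-1}\rangle\otimes(\frac{1-i}2|x_n\rangle+\frac{1+i}2|1-x_n\rangle)$;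 $\mathtt{XOR}^{(m,n)}|x_1..x_m,y_1..y_n\rangle=|x_1..x_m,y_1..y_{n-1}\rangle\otimes|x_m\oplus y_n\rangle$; $\mathtt T^{(m,n,p)}|x_1..x_m,y_1..y_n,z_1..z_p\rangle=|x_1..x_m,y_1..y_n,z_1..z_{p-1}\rangle\otimes|x_my_n\oplus z_p\rangle$ ($\oplus$ addition mod 2). For a gate $G$ on $\mathcal H^{(n)}$: $G_{\mathfrak T}=\mathfrak T^{(n)}G\mathfrak T^{(n)\dagger}$, $^{\mathfrak D}G_{\mathfrak T}(\rho)=G_{\mathfrak T}\rho G_{\mathfrak T}^\dagger$. Language: formulas built from atomic formulas (including distinguished atoms $\mathbf t,\mathbf f$) with unary $\lnot,\sqrt{id},\sqrt\lnot$, binary $\uplus$, ternary $\intercal$; $\alpha\land\beta:=\intercal(\alpha,\beta,\mathbf f)$, $\alpha\lor\beta:=\lnot(\lnot\alpha\land\lnot\beta)$. $At(\alpha)$ = number of occurrences of atomic formulas in $\alpha$. Syntactical tree: $Level_1^\alpha=(\alpha)$; $Level_{i+1}^\alpha$ is obtained from $Level_i^\alpha=(\beta_1,\dots,\beta_r)$ by replacing each non-atomic $\beta_j$ by its immediate subformulas (arguments, in order) and keeping atomic $\beta_j$; the last level $Level_h^\alpha$ lists all atomic occurrences. $\mathcal H^{(At\alpha)}=\bigotimes_j\mathcal H^{(At\beta_j)}$. The $\mathfrak T$-gate $G^\alpha_{\mathfrak T(i)}$ ($1\le i<h$) is the tensor product over $j$ of: identity of $\mathbb C^2$ if $\beta_j$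 atomic; $\mathtt{NOT}_{\mathfrak T}^{(At\beta)}$, $\sqrt{\mathtt I}_{\mathfrak T}^{(At\beta)}$, $\sqrt{\mathtt{NOT}}_{\mathfrak T}^{(At\beta)}$ for $\lnot\beta,\sqrt{id}\beta,\sqrt\lnot\beta$; $\mathtt{XOR}_{\mathfrak T}^{(At\beta',At\beta'')}$ for $\beta'\uplus\beta''$; $\mathtt T_{\mathfrak T}^{(At\beta',At\beta'',At\beta''')}$ for $\intercal(\beta',\beta'',\beta''')$. Holistic model: a map $\mathtt{Hol}_{\mathfrak T}$ assigning to each level $Level_i^\alpha$ of each formula $\alpha$ a qumix in $\mathfrak D(\mathcal H^{(At\alpha)})$ such that (a) $\mathtt{Hol}_{\mathfrak T}(Level_i^\alpha)={}^{\mathfrak D}G^\alpha_{\mathfrak T(i)}(\mathtt{Hol}_{\mathfrak T}(Level_{i+1}^\alpha))$ for $1\le i<h$; (b) (normality) for each $\gamma$, with the contextual meaning of the occurrence $\beta_j$ in $Level_i^\gamma=(\beta_1,\dots,\beta_r)$ defined as $Red^{(j)}_{[At\beta_1,\dots,At\beta_r]}(\mathtt{Hol}_{\mathfrak T}(Level_i^\gamma))$, all occurrences of the same subformula $\beta$ in the tree of $\gamma$ have the same contextual meaning, denoted $\mathtt{Hol}^\gamma_{\mathfrak T}(\beta)$; (c) every occurrence of $\mathbf f$ (resp. $\mathbf t$) has contextual meaning $^{\mathfrak T}P_0^{(1)}$ (resp. $^{\mathfrak T}P_1^{(1)}$). Logical consequence: $\alpha\vDash\beta$ iff for every truth-perspective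 $\mathfrak T$, every formula $\gamma$ having both $\alpha$ and $\beta$ as subformulas (a formula counts as a subformula of itself), and every holistic model $\mathtt{Hol}_{\mathfrak T}$, $\mathtt{Hol}^\gamma_{\mathfrak T}(\alpha)\preceq_{\mathfrak T}\mathtt{Hol}^\gamma_{\mathfrak T}(\beta)$; $\alpha\nvDash\beta$ means that $\alpha\vDash\beta$ fails. *)

theory Defs
  imports Complex_Main
begin

text \<open>Formulas: atomic formulas (propositional variables plus the distinguished
atoms t and f), unary connectives not, sqrt-id, sqrt-not, binary XOR, ternary Toffoli.\<close>

datatype form = Atom nat | Tr | Fa | Neg form | SqId form | SqNeg form
  | Xor form form | Tof form form form

definition Conj :: "form \<Rightarrow> form \<Rightarrow> form" where
  "Conj a b = Tof a b Fa"

definition Disj :: "form \<Rightarrow> form \<Rightarrow> form" where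
  "Disj a b = Neg (Conj (Neg a) (Neg b))"

fun is_atomic :: "form \<Rightarrow> bool" where
  "is_atomic (Atom _) = True"
| "is_atomic Tr = True"
| "is_atomic Fa = True"
| "is_atomic _ = False"

fun At :: "form \<Rightarrow> nat" where
  "At (Neg a) = At a"
| "At (SqId a) = At a"
| "At (SqNeg a) = At a"
| "At (Xor a b) = At a + At b"
| "At (Tof a b c) = At a + At b + At c"
| "At _ = 1"

fun expand :: "form \<Rightarrow> form list" where
  "expand (Neg a) = [a]"
| "expand (SqId a) = [a]"
| "expand (SqNeg a) = [a]"
| "expand (Xor a b) = [a, b]"
| "expand (Tof a b c) = [a, b, c]"
| "expand a = [a]"

definition next_level :: "form list \<Rightarrow> form list" where
  "next_level l = concat (map expand l)"

text \<open>Level i (for i \<ge> 1) of the syntactical tree of a formula.\<close>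
definition level :: "form \<Rightarrow> nat \<Rightarrow> form list" where
  "level a i = (next_level ^^ (i - 1)) [a]"

text \<open>Height h: the index of the last level (the one listing only atomic occurrences).\<close>
fun height :: "form \<Rightarrow> nat" where
  "height (Neg a) = Suc (height a)"
| "height (SqId a) = Suc (height a)"
| "height (SqNeg a) = Suc (height a)"
| "height (Xor a b) = Suc (max (height a) (height b))"
| "height (Tof a b c) = Suc (max (height a) (max (height b) (height c)))"
| "height _ = 1"

text \<open>An operator on H^(n) is given by its matrix in the canonical basis
|x_1,...,x_n>, indexed by bit lists of length n (False = 0, True = 1);
entry A x y = <x|A|y>. Values outside bit lists of length n are irrelevant.\<close>

type_synonym qop = "bool list \<Rightarrow> bool list \<Rightarrow> complex"
type_synonym qubit_op = "bool \<Rightarrow> bool \<Rightarrow> complex"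

definition bits :: "nat \<Rightarrow> bool list set" where
  "bits n = {xs. length xs = n}"

definition op_eq :: "nat \<Rightarrow> qop \<Rightarrow> qop \<Rightarrow> bool" where
  "op_eq n A B \<longleftrightarrow> (\<forall>x\<in>bits n. \<forall>y\<in>bits n. A x y = B x y)"

definition op_mult :: "nat \<Rightarrow> qop \<Rightarrow> qop \<Rightarrow> qop" where
  "op_mult n A B = (\<lambda>x y. \<Sum>z\<in>bits n. A x z * B z y)"

definition op_adj :: "qop \<Rightarrow> qop" where
  "op_adj A = (\<lambda>x y. cnj (A y x))"

definition op_trace :: "nat \<Rightarrow> qop \<Rightarrow> complex" where
  "op_trace n A = (\<Sum>x\<in>bits n. A x x)"

definition op_id :: qop where
  "op_id = (\<lambda>x y. if x = y then 1 else 0)"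

definition op_tensor :: "nat \<Rightarrow> qop \<Rightarrow> qop \<Rightarrow> qop" where
  "op_tensor m A B = (\<lambda>x y. A (take m x) (take m y) * B (drop m x) (drop m y))"

fun op_tensor_list :: "(nat \<times> qop) list \<Rightarrow> qop" where
  "op_tensor_list [] = op_id"
| "op_tensor_list ((m, A) # r) = op_tensor m A (op_tensor_list r)"

definition density :: "nat \<Rightarrow> qop \<Rightarrow> bool" where
  "density n \<rho> \<longleftrightarrow>
     (\<forall>x\<in>bits n. \<forall>y\<in>bits n. \<rho> x y = cnj (\<rho> y x)) \<and>
     (\<forall>v :: bool list \<Rightarrow> complex.
        Im (\<Sum>x\<in>bits n. \<Sum>y\<in>bits n. cnj (v x) * \<rho> x y * v y) = 0 \<and>
        Re (\<Sum>x\<in>bits n. \<Sum>y\<in>bits n. cnj (v x) * \<rho> x y * v y) \<ge> 0) \<and>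
     op_trace n \<rho> = 1"

definition unitary2 :: "qubit_op \<Rightarrow> bool" where
  "unitary2 U \<longleftrightarrow> (\<forall>x y. (\<Sum>z\<in>UNIV. cnj (U z x) * U z y) = (if x = y then 1 else 0))"

definition tp_power :: "qubit_op \<Rightarrow> qop" where
  "tp_power U = (\<lambda>x y. if length x = length y then (\<Prod>i<length x. U (x ! i) (y ! i)) else 0)"

definition conj_gate :: "nat \<Rightarrow> qubit_op \<Rightarrow> qop \<Rightarrow> qop" where
  "conj_gate n U G = op_mult n (op_mult n (tp_power U) G) (op_adj (tp_power U))"

definition apply_op :: "nat \<Rightarrow> qop \<Rightarrow> qop \<Rightarrow> qop" where
  "apply_op n G \<rho> = op_mult n (op_mult n G \<rho>) (op_adj G)"

definition perm_op :: "(bool list \<Rightarrow> bool list) \<Rightarrow> qop" where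
  "perm_op f = (\<lambda>x y. if x = f y then 1 else 0)"

definition NOT_gate :: qop where
  "NOT_gate = perm_op (\<lambda>y. butlast y @ [\<not> last y])"

definition sqrtI_gate :: qop where
  "sqrtI_gate = (\<lambda>x y. if butlast x = butlast y then
       (if last x = last y then (if last y then -1 else 1) / complex_of_real (sqrt 2)
        else 1 / complex_of_real (sqrt 2))
     else 0)"

definition sqrtNOT_gate :: qop where
  "sqrtNOT_gate = (\<lambda>x y. if butlast x = butlast y then
       (if last x = last y then (1 - \<i>) / 2 else (1 + \<i>) / 2)
     else 0)"

definition XOR_gate :: "nat \<Rightarrow> qop" where
  "XOR_gate m = perm_op (\<lambda>y. take m y @ butlast (drop m y)
       @ [last (take m y) \<noteq> last (drop m y)])"

definition Toffoli_gate :: "nat \<Rightarrow> nat \<Rightarrow> qop" where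
  "Toffoli_gate m k = perm_op (\<lambda>y. take m y @ take k (drop m y) @ butlast (drop (m + k) y)
       @ [(last (take m y) \<and> last (take k (drop m y))) \<noteq> last (drop (m + k) y)])"

fun node_gate :: "qubit_op \<Rightarrow> form \<Rightarrow> qop" where
  "node_gate U (Neg a) = conj_gate (At a) U NOT_gate"
| "node_gate U (SqId a) = conj_gate (At a) U sqrtI_gate"
| "node_gate U (SqNeg a) = conj_gate (At a) U sqrtNOT_gate"
| "node_gate U (Xor a b) = conj_gate (At a + At b) U (XOR_gate (At a))"
| "node_gate U (Tof a b c) = conj_gate (At a + At b + At c) U (Toffoli_gate (At a) (At b))"
| "node_gate U _ = op_id"

definition level_gate :: "qubit_op \<Rightarrow> form list \<Rightarrow> qop" where
  "level_gate U l = op_tensor_list (map (\<lambda>b. (At b, node_gate U b)) l)"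

definition proj1 :: "nat \<Rightarrow> qubit_op \<Rightarrow> qop" where
  "proj1 n U = (\<lambda>x y. \<Sum>z\<in>{z\<in>bits n. last z}. tp_power U x z * cnj (tp_power U y z))"

definition proj0 :: "nat \<Rightarrow> qubit_op \<Rightarrow> qop" where
  "proj0 n U = (\<lambda>x y. \<Sum>z\<in>{z\<in>bits n. \<not> last z}. tp_power U x z * cnj (tp_power U y z))"

definition prob :: "nat \<Rightarrow> qubit_op \<Rightarrow> qop \<Rightarrow> real" where
  "prob n U \<rho> = Re (op_trace n (op_mult n (proj1 n U) \<rho>))"

text \<open>Reduced state on the factor with (0-based) index j of
H^(n_1) \<otimes> ... \<otimes> H^(n_r), dims = [n_1,...,n_r].\<close>
definition red :: "nat list \<Rightarrow> nat \<Rightarrow> qop \<Rightarrow> qop" where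
  "red dims j \<rho> = (\<lambda>x y. \<Sum>z\<in>bits (sum_list (take j dims)).
       \<Sum>w\<in>bits (sum_list (drop (Suc j) dims)). \<rho> (z @ x @ w) (z @ y @ w))"

text \<open>A holistic model assigns to each formula gamma and level index i a qumix
Hol gamma i (only 1 \<le> i \<le> height gamma is relevant).\<close>

text \<open>Occurrence (i, j) of beta in the tree of gamma: level i, position j (0-based).\<close>
definition occ :: "form \<Rightarrow> form \<Rightarrow> nat \<times> nat \<Rightarrow> bool" where
  "occ \<gamma> \<beta> p \<longleftrightarrow> 1 \<le> fst p \<and> fst p \<le> height \<gamma> \<and> snd p < length (level \<gamma> (fst p))
      \<and> level \<gamma> (fst p) ! snd p = \<beta>"

definition ctx :: "(form \<Rightarrow> nat \<Rightarrow> qop) \<Rightarrow> form \<Rightarrow> nat \<times> nat \<Rightarrow> qop" where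
  "ctx Hol \<gamma> p = red (map At (level \<gamma> (fst p))) (snd p) (Hol \<gamma> (fst p))"

definition holistic_model :: "qubit_op \<Rightarrow> (form \<Rightarrow> nat \<Rightarrow> qop) \<Rightarrow> bool" where
  "holistic_model U Hol \<longleftrightarrow>
     (\<forall>\<gamma> i. 1 \<le> i \<and> i \<le> height \<gamma> \<longrightarrow> density (At \<gamma>) (Hol \<gamma> i)) \<and>
     (\<forall>\<gamma> i. 1 \<le> i \<and> i < height \<gamma> \<longrightarrow>
        op_eq (At \<gamma>) (Hol \<gamma> i)
          (apply_op (At \<gamma>) (level_gate U (level \<gamma> i)) (Hol \<gamma> (Suc i)))) \<and>
     (\<forall>\<gamma> \<beta> p q. occ \<gamma> \<beta> p \<and> occ \<gamma> \<beta> q \<longrightarrow> op_eq (At \<beta>) (ctx Hol \<gamma> p) (ctx Hol \<gamma> q)) \<and>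
     (\<forall>\<gamma> p. occ \<gamma> Fa p \<longrightarrow> op_eq 1 (ctx Hol \<gamma> p) (proj0 1 U)) \<and>
     (\<forall>\<gamma> p. occ \<gamma> Tr p \<longrightarrow> op_eq 1 (ctx Hol \<gamma> p) (proj1 1 U))"

definition subformula :: "form \<Rightarrow> form \<Rightarrow> bool" where
  "subformula \<beta> \<gamma> \<longleftrightarrow> (\<exists>p. occ \<gamma> \<beta> p)"

text \<open>Hol^gamma_T(beta): the (common) contextual meaning of the occurrences of beta.\<close>
definition hol_mean :: "(form \<Rightarrow> nat \<Rightarrow> qop) \<Rightarrow> form \<Rightarrow> form \<Rightarrow> qop" where
  "hol_mean Hol \<gamma> \<beta> = ctx Hol \<gamma> (SOME p. occ \<gamma> \<beta> p)"

definition entails :: "form \<Rightarrow> form \<Rightarrow> bool" where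
  "entails \<alpha> \<beta> \<longleftrightarrow>
     (\<forall>U \<gamma> Hol. unitary2 U \<longrightarrow> subformula \<alpha> \<gamma> \<longrightarrow> subformula \<beta> \<gamma> \<longrightarrow>
        holistic_model U Hol \<longrightarrow>
        prob (At \<alpha>) U (hol_mean Hol \<gamma> \<alpha>) \<le> prob (At \<beta>) U (hol_mean Hol \<gamma> \<beta>))"

end

theory Submission
  imports Defs
begin

text \<open>
  All counterexamples are holistic models for the identity truth-perspective. At the bottom
  level of a formula \<open>\<gamma>\<close> a fair coin \<open>c\<close> is tossed; every occurrence of an atom is put in the
  basis state \<open>c \<noteq> s\<close> for a seed bit \<open>s\<close> attached to that occurrence, while \<open>t\<close> and \<open>f\<close> are put
  in \<open>|1\<rangle>\<close> and \<open>|0\<rangle>\<close>; the upper levels are obtained by applying the level gates. Reducing the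
  state of a level to an occurrence of a subformula \<open>\<beta>\<close> gives the state that the subtree of \<open>\<beta>\<close>
  builds from the reduced bottom mixture, so normality only requires the seeds of any two
  occurrences of \<open>\<beta>\<close> to agree on all atom leaves or to disagree on all of them: flipping the coin
  merely swaps the two halves of the mixture. The gates of negation, XOR and Toffoli permute basis
  states, so for formulas built from them the probability of an occurrence is the fraction of coin
  values for which its classical circuit outputs 1. As distinct occurrences of one atom may carry
  opposite seeds, \<open>\<alpha> \<and> \<alpha>\<close> can be false for both coin values while \<open>\<alpha>\<close> is true for one of them;
  the other items are obtained in the same way inside \<open>\<gamma> = \<alpha> \<uplus> \<beta>\<close> and checked by evaluation,
  and item (7) follows from item (1) because \<open>\<alpha> \<Turnstile> \<alpha>\<close>.
\<close>

section \<open>Finite sums over bit strings\<close>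

lemma if_one_zero_mult [simp]:
  fixes a :: "'a :: semiring_1"
  shows "(if P then 1 else 0) * a = (if P then a else 0)"
    and "a * (if P then 1 else 0) = (if P then a else 0)"
  by simp_all

lemma bits_iff [simp]: "x \<in> bits n \<longleftrightarrow> length x = n"
  by (simp add: bits_def)

lemma finite_bits [simp]: "finite (bits n)"
  using finite_lists_length_eq[of "UNIV :: bool set" n] by (simp add: bits_def)

lemma sum_bits_append: "(\<Sum>x\<in>bits (m + k). f x) = (\<Sum>y\<in>bits m. \<Sum>z\<in>bits k. f (y @ z))"
proof -
  have split: "bits (m + k) = (\<lambda>(y, z). y @ z) ` (bits m \<times> bits k)"
    by (auto intro!: image_eqI[where x = "(take m x, drop m x)" for x])
  have "inj_on (\<lambda>(y, z). y @ z) (bits m \<times> bits k)"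
    by (auto simp: inj_on_def)
  then show ?thesis
    by (simp add: split sum.reindex sum.cartesian_product split_def)
qed

lemma sum_bits_append3:
  "(\<Sum>u\<in>bits (a + n + b). f u) = (\<Sum>u1\<in>bits a. \<Sum>u2\<in>bits n. \<Sum>u3\<in>bits b. f (u1 @ u2 @ u3))"
  by (simp add: sum_bits_append)

lemma length_Suc_0_cases: "length x = Suc 0 \<Longrightarrow> x = [False] \<or> x = [True]"
  by (cases x) auto

lemma sum_bits_1: "(\<Sum>x\<in>bits 1. f x) = f [False] + f [True]"
proof -
  have "bits 1 = {[False], [True]}"
    by (auto dest: length_Suc_0_cases)
  then show ?thesis by simp
qed

lemma sum_swap_pairs:
  "(\<Sum>a\<in>A. \<Sum>b\<in>B. \<Sum>c\<in>C. \<Sum>d\<in>D. f a b c d) = (\<Sum>c\<in>C. \<Sum>d\<in>D. \<Sum>a\<in>A. \<Sum>b\<in>B. f a b c d)"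
  by (simp only: sum.swap[of _ B C] sum.swap[of _ B D] sum.swap[of _ A C] sum.swap[of _ A D])

lemma sum_delta_pair:
  assumes "finite A" and "finite B" and "a \<in> A" and "b \<in> B"
  shows "(\<Sum>x\<in>A. \<Sum>y\<in>B. if x = a \<and> y = b then f x y else 0) = f a b"
proof -
  have "(\<Sum>y\<in>B. if x = a \<and> y = b then f x y else 0) = (if x = a then f x b else 0)" for x
    using assms by (cases "x = a") simp_all
  then show ?thesis
    using assms by simp
qed

lemma sum_delta_first_last:
  assumes "finite A" and "finite B" and "finite C" and "v1 \<in> A" and "v3 \<in> C"
  shows "(\<Sum>u1\<in>A. \<Sum>u2\<in>B. \<Sum>u3\<in>C. if v1 = u1 \<and> v3 = u3 then F u1 u2 u3 else 0) = (\<Sum>u2\<in>B. F v1 u2 v3)"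
proof -
  have "(\<Sum>u1\<in>A. \<Sum>u2\<in>B. \<Sum>u3\<in>C. if v1 = u1 \<and> v3 = u3 then F u1 u2 u3 else 0)
      = (\<Sum>u1\<in>A. if v1 = u1 then \<Sum>u2\<in>B. \<Sum>u3\<in>C. if v3 = u3 then F u1 u2 u3 else 0 else 0)"
    by (rule sum.cong[OF refl]) simp
  then show ?thesis
    using assms by simp
qed

section \<open>Operators on qubit registers\<close>

lemma op_eq_refl [simp]: "op_eq n A A"
  by (simp add: op_eq_def)

lemma op_eq_sym: "op_eq n A B \<Longrightarrow> op_eq n B A"
  by (simp add: op_eq_def)

lemma op_eq_trans [trans]: "op_eq n A B \<Longrightarrow> op_eq n B C \<Longrightarrow> op_eq n A C"
  by (simp add: op_eq_def)

definition unitary_op :: "nat \<Rightarrow> qop \<Rightarrow> bool" where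
  "unitary_op n G \<longleftrightarrow>
     (\<forall>u\<in>bits n. \<forall>v\<in>bits n. (\<Sum>x\<in>bits n. cnj (G x u) * G x v) = (if u = v then 1 else 0))"

lemma unitary_op_cong: "op_eq n G G' \<Longrightarrow> unitary_op n G \<Longrightarrow> unitary_op n G'"
  unfolding unitary_op_def op_eq_def by simp

lemma unitary_op_perm_op:
  assumes "\<And>y. y \<in> bits n \<Longrightarrow> f y \<in> bits n" and "inj_on f (bits n)"
  shows "unitary_op n (perm_op f)"
  unfolding unitary_op_def perm_op_def
proof (intro ballI)
  fix u v assume u: "u \<in> bits n" and v: "v \<in> bits n"
  have "(\<Sum>x\<in>bits n. cnj (if x = f u then 1 else 0) * (if x = f v then 1 else 0 :: complex))
      = (\<Sum>x\<in>bits n. if x = f u then (if f u = f v then 1 else 0) else 0)"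
    by (rule sum.cong) auto
  also have "\<dots> = (if u = v then 1 else 0)"
    using assms u v by (auto dest: inj_onD)
  finally show "(\<Sum>x\<in>bits n. cnj (if x = f u then 1 else 0) * (if x = f v then 1 else 0 :: complex))
      = (if u = v then 1 else 0)" .
qed

lemma perm_op_id: "perm_op id = op_id"
  by (simp add: perm_op_def op_id_def eq_commute)

lemma unitary_op_id: "unitary_op n op_id"
  using unitary_op_perm_op[of n id] by (simp add: perm_op_id)

lemma unitary_op_tensor:
  assumes A: "unitary_op m A" and B: "unitary_op k B"
  shows "unitary_op (m + k) (op_tensor m A B)"
  unfolding unitary_op_def
proof (intro ballI)
  fix u v assume u: "u \<in> bits (m + k)" and v: "v \<in> bits (m + k)"
  have "(\<Sum>x\<in>bits (m + k). cnj (op_tensor m A B x u) * op_tensor m A B x v)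
     = (\<Sum>y\<in>bits m. cnj (A y (take m u)) * A y (take m v))
       * (\<Sum>z\<in>bits k. cnj (B z (drop m u)) * B z (drop m v))"
    unfolding sum_bits_append op_tensor_def sum_product
    by (intro sum.cong refl) (simp add: algebra_simps)
  also have "\<dots> = (if take m u = take m v \<and> drop m u = drop m v then 1 else 0)"
    using A B u v unfolding unitary_op_def by simp
  also have "\<dots> = (if u = v then 1 else 0)"
    by (metis append_take_drop_id)
  finally show "(\<Sum>x\<in>bits (m + k). cnj (op_tensor m A B x u) * op_tensor m A B x v)
      = (if u = v then 1 else 0)" .
qed

lemma apply_op_entry:
  "apply_op n G \<rho> x y = (\<Sum>z\<in>bits n. \<Sum>w\<in>bits n. G x w * \<rho> w z * cnj (G y z))"
  unfolding apply_op_def op_mult_def op_adj_def by (simp add: sum_distrib_right)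

lemma apply_op_cong: "op_eq n \<rho> \<rho>' \<Longrightarrow> apply_op n G \<rho> = apply_op n G \<rho>'"
  unfolding op_eq_def by (intro ext) (simp add: apply_op_entry)

lemma apply_op_cong_gate: "op_eq n G G' \<Longrightarrow> op_eq n (apply_op n G \<rho>) (apply_op n G' \<rho>)"
  unfolding op_eq_def by (simp add: apply_op_entry)

lemma apply_op_id: "op_eq n (apply_op n op_id \<rho>) \<rho>"
proof (unfold op_eq_def, intro ballI)
  fix x y :: "bool list" assume "x \<in> bits n" and "y \<in> bits n"
  have "apply_op n op_id \<rho> x y = (\<Sum>z\<in>bits n. if y = z then \<Sum>w\<in>bits n. if x = w then \<rho> w z else 0 else 0)"
    unfolding apply_op_entry op_id_def by (intro sum.cong refl) auto
  also have "\<dots> = \<rho> x y"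
    using \<open>x \<in> bits n\<close> \<open>y \<in> bits n\<close> by simp
  finally show "apply_op n op_id \<rho> x y = \<rho> x y" .
qed

lemma apply_op_hermitian:
  assumes "\<And>x y. x \<in> bits n \<Longrightarrow> y \<in> bits n \<Longrightarrow> cnj (\<rho> x y) = \<rho> y x"
  shows "cnj (apply_op n G \<rho> y x) = apply_op n G \<rho> x y"
proof -
  have "cnj (apply_op n G \<rho> y x) = (\<Sum>z\<in>bits n. \<Sum>w\<in>bits n. cnj (G y w) * \<rho> z w * G x z)"
    using assms by (simp add: apply_op_entry cnj_sum)
  also have "\<dots> = apply_op n G \<rho> x y"
    unfolding apply_op_entry by (subst sum.swap) (simp add: mult_ac)
  finally show ?thesis .
qed

lemma apply_op_quadratic_form:
  "(\<Sum>x\<in>bits n. \<Sum>y\<in>bits n. cnj (v x) * apply_op n G \<rho> x y * v y)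
   = (\<Sum>w\<in>bits n. \<Sum>z\<in>bits n. cnj (\<Sum>x\<in>bits n. cnj (G x w) * v x) * \<rho> w z * (\<Sum>y\<in>bits n. cnj (G y z) * v y))"
proof -
  have "(\<Sum>x\<in>bits n. \<Sum>y\<in>bits n. cnj (v x) * apply_op n G \<rho> x y * v y)
      = (\<Sum>x\<in>bits n. \<Sum>y\<in>bits n. \<Sum>z\<in>bits n. \<Sum>w\<in>bits n. cnj (v x) * G x w * \<rho> w z * cnj (G y z) * v y)"
    by (simp add: apply_op_entry sum_distrib_left sum_distrib_right mult_ac)
  also have "\<dots> = (\<Sum>z\<in>bits n. \<Sum>w\<in>bits n. \<Sum>x\<in>bits n. \<Sum>y\<in>bits n.
      cnj (v x) * G x w * \<rho> w z * cnj (G y z) * v y)"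
    by (rule sum_swap_pairs)
  also have "\<dots> = (\<Sum>w\<in>bits n. \<Sum>z\<in>bits n. \<Sum>x\<in>bits n. \<Sum>y\<in>bits n.
      cnj (v x) * G x w * \<rho> w z * cnj (G y z) * v y)"
    by (rule sum.swap)
  also have "\<dots> = (\<Sum>w\<in>bits n. \<Sum>z\<in>bits n.
      cnj (\<Sum>x\<in>bits n. cnj (G x w) * v x) * \<rho> w z * (\<Sum>y\<in>bits n. cnj (G y z) * v y))"
    by (simp add: cnj_sum sum_distrib_left sum_distrib_right mult_ac)
  finally show ?thesis .
qed

lemma trace_apply_op:
  assumes "unitary_op n G"
  shows "op_trace n (apply_op n G \<rho>) = op_trace n \<rho>"
proof -
  have "op_trace n (apply_op n G \<rho>) = (\<Sum>z\<in>bits n. \<Sum>w\<in>bits n. \<rho> w z * (\<Sum>x\<in>bits n. cnj (G x z) * G x w))"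
    unfolding op_trace_def apply_op_entry
    by (subst sum.swap, rule sum.cong[OF refl], subst sum.swap)
       (simp add: sum_distrib_left mult_ac)
  also have "\<dots> = op_trace n \<rho>"
  proof -
    have "(\<Sum>x\<in>bits n. cnj (G x z) * G x w) = (if z = w then 1 else 0)"
      if "z \<in> bits n" "w \<in> bits n" for z w
      using assms that unfolding unitary_op_def by blast
    then show ?thesis
      unfolding op_trace_def by (simp cong: if_cong)
  qed
  finally show ?thesis .
qed

lemma density_apply_op:
  assumes "unitary_op n G" and "density n \<rho>"
  shows "density n (apply_op n G \<rho>)"
proof -
  have "\<And>x y. x \<in> bits n \<Longrightarrow> y \<in> bits n \<Longrightarrow> cnj (\<rho> x y) = \<rho> y x"
    using assms(2) unfolding density_def by (metis complex_cnj_cnj)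
  from apply_op_hermitian[OF this]
  have "apply_op n G \<rho> x y = cnj (apply_op n G \<rho> y x)" for x y
    by simp
  moreover have "Im (\<Sum>x\<in>bits n. \<Sum>y\<in>bits n. cnj (v x) * apply_op n G \<rho> x y * v y) = 0 \<and>
      Re (\<Sum>x\<in>bits n. \<Sum>y\<in>bits n. cnj (v x) * apply_op n G \<rho> x y * v y) \<ge> 0" for v
    using assms(2)[unfolded density_def, THEN conjunct2, THEN conjunct1,
        rule_format, of "\<lambda>w. \<Sum>x\<in>bits n. cnj (G x w) * v x"]
    unfolding apply_op_quadratic_form by simp
  moreover have "op_trace n (apply_op n G \<rho>) = 1"
    using assms by (simp add: trace_apply_op density_def)
  ultimately show ?thesis
    unfolding density_def by blast
qed

section \<open>Gates for the identity truth-perspective\<close>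

definition id_perspective :: qubit_op where
  "id_perspective = (\<lambda>a b. if a = b then 1 else 0)"

lemma unitary2_id_perspective: "unitary2 id_perspective"
  unfolding unitary2_def id_perspective_def by (auto simp: UNIV_bool)

lemma tp_power_id_perspective:
  assumes "length x = length y"
  shows "tp_power id_perspective x y = (if x = y then 1 else 0)"
proof -
  have "(\<Prod>i<n. if P i then 1 else (0::complex)) = (if \<forall>i<n. P i then 1 else 0)" for n :: nat and P
    by (induction n) (auto simp: lessThan_Suc less_Suc_eq)
  then show ?thesis
    using assms unfolding tp_power_def id_perspective_def by (simp add: list_eq_iff_nth_eq)
qed

lemma conj_gate_id_perspective: "op_eq n (conj_gate n id_perspective G) G"
proof (unfold op_eq_def, intro ballI)
  fix x y :: "bool list" assume x: "x \<in> bits n" and y: "y \<in> bits n"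
  have "conj_gate n id_perspective G x y
      = (\<Sum>z\<in>bits n. (\<Sum>w\<in>bits n. (if x = w then 1 else 0) * G w z) * cnj (if y = z then 1 else 0))"
    unfolding conj_gate_def op_mult_def op_adj_def using x y
    by (intro sum.cong refl arg_cong2[where f = "(*)"]) (auto simp: tp_power_id_perspective)
  also have "\<dots> = G x y"
    using x y by (simp add: if_distrib[of cnj] cong: if_cong)
  finally show "conj_gate n id_perspective G x y = G x y" .
qed

lemma unitary_op_involution:
  assumes "\<And>y. y \<in> bits n \<Longrightarrow> f y \<in> bits n \<and> f (f y) = y"
  shows "unitary_op n (perm_op f)"
  using assms by (intro unitary_op_perm_op inj_on_inverseI[of _ f f]) auto

lemma unitary_op_single_qubit:
  assumes "unitary2 g"
  shows "unitary_op 1 (\<lambda>x y. g (last x) (last y))"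
proof -
  have "u = v \<longleftrightarrow> last u = last v" if "u \<in> bits 1" "v \<in> bits 1" for u v
    using that by (auto dest!: length_Suc_0_cases)
  then show ?thesis
    using assms unfolding unitary_op_def unitary2_def sum_bits_1 by (simp add: UNIV_bool add.commute)
qed

lemma unitary_op_last_qubit:
  assumes "n \<ge> 1" and "unitary2 g"
  shows "unitary_op n (\<lambda>x y. if butlast x = butlast y then g (last x) (last y) else 0)"
proof -
  have "op_eq n (op_tensor (n - 1) op_id (\<lambda>x y. g (last x) (last y)))
      (\<lambda>x y. if butlast x = butlast y then g (last x) (last y) else 0)"
    using assms(1) by (auto simp: op_eq_def op_tensor_def op_id_def butlast_conv_take last_drop)
  moreover have "unitary_op (n - 1 + 1) (op_tensor (n - 1) op_id (\<lambda>x y. g (last x) (last y)))"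
    by (intro unitary_op_tensor unitary_op_id unitary_op_single_qubit assms(2))
  ultimately show ?thesis
    using assms(1) by (simp add: unitary_op_cong)
qed

lemma At_pos: "At b \<ge> 1"
  by (induction b) auto

definition not_map :: "bool list \<Rightarrow> bool list" where
  "not_map y = butlast y @ [\<not> last y]"

definition xor_map :: "nat \<Rightarrow> bool list \<Rightarrow> bool list" where
  "xor_map m y = take m y @ butlast (drop m y) @ [last (take m y) \<noteq> last (drop m y)]"

definition toffoli_map :: "nat \<Rightarrow> nat \<Rightarrow> bool list \<Rightarrow> bool list" where
  "toffoli_map m k y = take m y @ take k (drop m y) @ butlast (drop (m + k) y)
       @ [(last (take m y) \<and> last (take k (drop m y))) \<noteq> last (drop (m + k) y)]"

lemma NOT_gate_perm_op: "NOT_gate = perm_op not_map"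
  by (simp add: NOT_gate_def not_map_def[abs_def])

lemma XOR_gate_perm_op: "XOR_gate m = perm_op (xor_map m)"
  by (simp add: XOR_gate_def xor_map_def[abs_def])

lemma Toffoli_gate_perm_op: "Toffoli_gate m k = perm_op (toffoli_map m k)"
  by (simp add: Toffoli_gate_def toffoli_map_def[abs_def])

lemma not_map_snoc: "not_map (v @ [b]) = v @ [\<not> b]"
  by (simp add: not_map_def)

lemma xor_map_snoc: "length u = m \<Longrightarrow> xor_map m (u @ v @ [b]) = u @ v @ [last u \<noteq> b]"
  by (simp add: xor_map_def)

lemma toffoli_map_snoc:
  "length u = m \<Longrightarrow> length v = k \<Longrightarrow> toffoli_map m k (u @ v @ w @ [b]) = u @ v @ w @ [(last u \<and> last v) \<noteq> b]"
  by (simp add: toffoli_map_def)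

lemma snoc_split:
  assumes "length y > m"
  obtains u v b where "y = u @ v @ [b]" and "length u = m"
proof
  have "drop m y \<noteq> []"
    using assms by simp
  then show "y = take m y @ butlast (drop m y) @ [last (drop m y)]"
    by (metis append_butlast_last_id append_take_drop_id)
qed (use assms in simp)

lemma unitary_op_NOT_gate:
  assumes "n \<ge> 1"
  shows "unitary_op n NOT_gate"
  unfolding NOT_gate_perm_op
proof (rule unitary_op_involution)
  fix y assume "y \<in> bits n"
  with assms obtain v b where "y = v @ [b]"
    by (cases y rule: rev_exhaust) auto
  then show "not_map y \<in> bits n \<and> not_map (not_map y) = y"
    using \<open>y \<in> bits n\<close> by (simp add: not_map_snoc)
qed

lemma unitary_op_XOR_gate:
  assumes "m \<ge> 1" and "k \<ge> 1"
  shows "unitary_op (m + k) (XOR_gate m)"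
  unfolding XOR_gate_perm_op
proof (rule unitary_op_involution)
  fix y assume "y \<in> bits (m + k)"
  with assms have "m < length y"
    by simp
  then obtain u v b where "y = u @ v @ [b]" and "length u = m"
    by (rule snoc_split)
  then show "xor_map m y \<in> bits (m + k) \<and> xor_map m (xor_map m y) = y"
    using \<open>y \<in> bits (m + k)\<close> by (auto simp: xor_map_snoc)
qed

lemma unitary_op_Toffoli_gate:
  assumes "m \<ge> 1" and "k \<ge> 1" and "p \<ge> 1"
  shows "unitary_op (m + k + p) (Toffoli_gate m k)"
  unfolding Toffoli_gate_perm_op
proof (rule unitary_op_involution)
  fix y assume y: "y \<in> bits (m + k + p)"
  obtain u z where "y = u @ z" and "length u = m"
    by (rule that[of "take m y" "drop m y"]) (use y in auto)
  moreover have "k < length z"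
    using y assms \<open>y = u @ z\<close> \<open>length u = m\<close> by simp
  then obtain v w b where "z = v @ w @ [b]" and "length v = k"
    by (rule snoc_split)
  ultimately show "toffoli_map m k y \<in> bits (m + k + p) \<and> toffoli_map m k (toffoli_map m k y) = y"
    using y by (auto simp: toffoli_map_snoc)
qed

lemma unitary_op_sqrtI_gate:
  assumes "n \<ge> 1"
  shows "unitary_op n sqrtI_gate"
proof -
  define s where "s = 1 / complex_of_real (sqrt 2)"
  define g where "g = (\<lambda>b c. if b = c then (if c then - s else s) else s)"
  have "complex_of_real (sqrt 2) * complex_of_real (sqrt 2) = 2"
    by (simp flip: of_real_mult)
  then have "cnj s = s" and "s * s = 1 / 2"
    by (simp_all add: s_def)
  then have "unitary2 g"
    unfolding unitary2_def g_def by (auto simp: UNIV_bool algebra_simps)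
  have eq: "sqrtI_gate = (\<lambda>x y. if butlast x = butlast y then g (last x) (last y) else 0)"
    by (intro ext) (simp add: sqrtI_gate_def g_def s_def)
  show ?thesis
    unfolding eq using \<open>unitary2 g\<close> by (rule unitary_op_last_qubit[OF assms])
qed

lemma unitary_op_sqrtNOT_gate:
  assumes "n \<ge> 1"
  shows "unitary_op n sqrtNOT_gate"
proof -
  define g :: qubit_op where "g = (\<lambda>b c. if b = c then (1 - \<i>) / 2 else (1 + \<i>) / 2)"
  have "unitary2 g"
    unfolding unitary2_def g_def by (auto simp: UNIV_bool complex_eq_iff)
  have eq: "sqrtNOT_gate = (\<lambda>x y. if butlast x = butlast y then g (last x) (last y) else 0)"
    by (intro ext) (simp add: sqrtNOT_gate_def g_def)
  show ?thesis
    unfolding eq using \<open>unitary2 g\<close> by (rule unitary_op_last_qubit[OF assms])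
qed

lemma unitary_op_conj_gate_id_perspective:
  "unitary_op n G \<Longrightarrow> unitary_op n (conj_gate n id_perspective G)"
  using unitary_op_cong[OF op_eq_sym[OF conj_gate_id_perspective]] .

lemma unitary_op_node_gate: "unitary_op (At b) (node_gate id_perspective b)"
  using At_pos
  by (cases b) (auto intro!: unitary_op_conj_gate_id_perspective unitary_op_NOT_gate
      unitary_op_sqrtI_gate unitary_op_sqrtNOT_gate unitary_op_XOR_gate unitary_op_Toffoli_gate
      simp: unitary_op_id)

lemma unitary_op_level_gate: "unitary_op (sum_list (map At l)) (level_gate id_perspective l)"
  by (induction l)
    (auto simp: level_gate_def unitary_op_id intro: unitary_op_tensor unitary_op_node_gate)

section \<open>The syntactical tree\<close>

lemma height_ne_0 [simp]: "height b \<noteq> 0"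
  by (cases b) auto

lemma height_pos: "height b \<ge> 1"
  using height_ne_0[of b] by linarith

lemma is_atomic_simps:
  assumes "is_atomic b"
  shows "expand b = [b]" and "At b = 1" and "node_gate U b = op_id" and "height b = 1"
  using assms by (cases b; simp)+

lemma height_one_is_atomic: "height b = 1 \<Longrightarrow> is_atomic b"
  by (cases b) auto

lemma sum_At_next_level: "sum_list (map At (next_level l)) = sum_list (map At l)"
proof -
  have "sum_list (map At (expand b)) = At b" for b
    by (cases b) auto
  then show ?thesis
    by (induction l) (simp_all add: next_level_def)
qed

lemma sum_At_next_level_pow: "sum_list (map At ((next_level ^^ k) l)) = sum_list (map At l)"
  by (induction k) (simp_all add: sum_At_next_level)

lemma next_level_pow_append: "(next_level ^^ k) (xs @ ys) = (next_level ^^ k) xs @ (next_level ^^ k) ys"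
  by (induction k) (simp_all add: next_level_def)

lemma level_add: "i \<ge> 1 \<Longrightarrow> level g (i + k) = (next_level ^^ k) (level g i)"
  unfolding level_def by (cases i) (simp_all add: add.commute[of _ k] funpow_add)

lemma sum_At_level: "sum_list (map At (level g i)) = At g"
  unfolding level_def by (simp add: sum_At_next_level_pow)

lemma height_level:
  assumes "i \<ge> 1" and "x \<in> set (level g i)"
  shows "is_atomic x \<or> height x + i \<le> height g + 1"
  using assms
proof (induction i arbitrary: x rule: nat_induct_at_least)
  case base
  then show ?case by (simp add: level_def)
next
  case (Suc n)
  then obtain y where y: "y \<in> set (level g n)" and x: "x \<in> set (expand y)"
    using level_add[of n g 1] by (auto simp: next_level_def)
  show ?case
  proof (cases "is_atomic y")
    case True
    then show ?thesis using x is_atomic_simps[OF True] by auto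
  next
    case False
    then have "height x + 1 \<le> height y"
      using x by (cases y) auto
    then show ?thesis
      using Suc.IH[OF y] False by auto
  qed
qed

lemma level_beyond_height_atomic: "i \<ge> height g \<Longrightarrow> x \<in> set (level g i) \<Longrightarrow> is_atomic x"
  using height_level[of i x g] height_pos[of g] height_pos[of x] height_one_is_atomic[of x] by force

lemma level_split:
  assumes "level g i = L1 @ [b] @ L2" and "1 \<le> i" and "i \<le> k"
  shows "level g k = (next_level ^^ (k - i)) L1 @ level b (k - i + 1) @ (next_level ^^ (k - i)) L2"
proof -
  have "level g k = (next_level ^^ (k - i)) (level g i)"
    using level_add[OF assms(2), of g "k - i"] assms(3) by simp
  then show ?thesis
    unfolding assms(1) next_level_pow_append by (simp add: level_def)
qed

lemma op_tensor_assoc: "op_tensor m A (op_tensor k B C) = op_tensor (m + k) (op_tensor m A B) C"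
  by (intro ext) (simp add: op_tensor_def take_take drop_take add.commute mult.assoc)

lemma level_gate_append:
  "level_gate U (xs @ ys) = op_tensor (sum_list (map At xs)) (level_gate U xs) (level_gate U ys)"
proof (induction xs)
  case Nil
  show ?case
    by (intro ext) (simp add: level_gate_def op_tensor_def op_id_def)
next
  case (Cons a xs)
  then show ?case
    by (simp add: level_gate_def op_tensor_assoc)
qed

lemma level_gate_atomic: "\<forall>x\<in>set l. is_atomic x \<Longrightarrow> level_gate U l = op_id"
proof (induction l)
  case Nil
  then show ?case by (simp add: level_gate_def)
next
  case (Cons a l)
  have "op_tensor m op_id op_id = op_id" for m
    by (intro ext) (auto simp: op_tensor_def op_id_def, metis append_take_drop_id)
  then show ?case
    using Cons is_atomic_simps(3)[of a U] by (simp add: level_gate_def)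
qed

fun leaves :: "form \<Rightarrow> form list" where
  "leaves (Neg a) = leaves a"
| "leaves (SqId a) = leaves a"
| "leaves (SqNeg a) = leaves a"
| "leaves (Xor a b) = leaves a @ leaves b"
| "leaves (Tof a b c) = leaves a @ leaves b @ leaves c"
| "leaves a = [a]"

lemma length_leaves: "length (leaves b) = At b"
  by (induction b) auto

lemma length_concat_leaves: "length (concat (map leaves l)) = sum_list (map At l)"
  by (induction l) (simp_all add: length_leaves)

lemma concat_leaves_level: "concat (map leaves (level g i)) = leaves g"
proof -
  have "concat (map leaves (next_level l)) = concat (map leaves l)" for l
  proof -
    have "concat (map leaves (expand b)) = leaves b" for b
      by (cases b) auto
    then show ?thesis
      by (induction l) (simp_all add: next_level_def)
  qed
  then have "concat (map leaves ((next_level ^^ k) l)) = concat (map leaves l)" for k l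
    by (induction k) simp_all
  then show ?thesis
    by (simp add: level_def)
qed

section \<open>Level states and reduced states\<close>

fun evolve :: "form \<Rightarrow> qop \<Rightarrow> nat \<Rightarrow> qop" where
  "evolve g \<rho> 0 = \<rho>"
| "evolve g \<rho> (Suc d) =
     apply_op (At g) (level_gate id_perspective (level g (height g - Suc d))) (evolve g \<rho> d)"

definition level_state :: "form \<Rightarrow> qop \<Rightarrow> nat \<Rightarrow> qop" where
  "level_state g \<rho> i = evolve g \<rho> (height g - i)"

lemma level_state_bottom: "height g \<le> i \<Longrightarrow> level_state g \<rho> i = \<rho>"
  by (simp add: level_state_def)

lemma level_state_step:
  assumes "i < height g"
  shows "level_state g \<rho> i
    = apply_op (At g) (level_gate id_perspective (level g i)) (level_state g \<rho> (Suc i))"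
proof -
  have "height g - i = Suc (height g - Suc i)" and "height g - Suc (height g - Suc i) = i"
    using assms by simp_all
  then show ?thesis
    by (simp add: level_state_def)
qed

lemma level_state_step_op_eq:
  "op_eq (At g) (level_state g \<rho> i)
     (apply_op (At g) (level_gate id_perspective (level g i)) (level_state g \<rho> (Suc i)))"
proof (cases "i < height g")
  case True
  then show ?thesis by (simp add: level_state_step)
next
  case False
  then have "level_gate id_perspective (level g i) = op_id"
    by (intro level_gate_atomic ballI level_beyond_height_atomic) simp_all
  then show ?thesis
    using False apply_op_id[of "At g" \<rho>] by (simp add: level_state_bottom op_eq_sym)
qed

lemma density_level_state: "density (At g) \<rho> \<Longrightarrow> density (At g) (level_state g \<rho> i)"
proof -
  assume "density (At g) \<rho>"
  then have "density (At g) (evolve g \<rho> d)" for d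
    using unitary_op_level_gate[of "level g _"]
    by (induction d) (simp_all add: sum_At_level density_apply_op)
  then show ?thesis
    by (simp add: level_state_def)
qed

lemma level_state_cong: "op_eq (At g) \<rho> \<rho>' \<Longrightarrow> op_eq (At g) (level_state g \<rho> i) (level_state g \<rho>' i)"
proof -
  assume "op_eq (At g) \<rho> \<rho>'"
  then have "op_eq (At g) (evolve g \<rho> d) (evolve g \<rho>' d)" for d
    by (induction d) (simp_all add: apply_op_cong[of "At g"])
  then show ?thesis
    by (simp add: level_state_def)
qed

definition partial_trace :: "nat \<Rightarrow> nat \<Rightarrow> qop \<Rightarrow> qop" where
  "partial_trace a b \<rho> = (\<lambda>x y. \<Sum>z\<in>bits a. \<Sum>w\<in>bits b. \<rho> (z @ x @ w) (z @ y @ w))"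

lemma red_eq_partial_trace:
  "red dims j \<rho> = partial_trace (sum_list (take j dims)) (sum_list (drop (Suc j) dims)) \<rho>"
  by (simp add: red_def partial_trace_def)

lemma tensor3_trace_kernel:
  assumes "unitary_op a A" and "unitary_op b C"
    and "length x = n" "length y = n"
    and "length u1 = a" "length u2 = n" "length u3 = b" "length v1 = a" "length v2 = n" "length v3 = b"
  shows "(\<Sum>z\<in>bits a. \<Sum>w\<in>bits b. op_tensor a A (op_tensor n B C) (z @ x @ w) (u1 @ u2 @ u3)
            * cnj (op_tensor a A (op_tensor n B C) (z @ y @ w) (v1 @ v2 @ v3)))
         = (if v1 = u1 \<and> v3 = u3 then B x u2 * cnj (B y v2) else 0)"
proof -
  have "(\<Sum>z\<in>bits a. \<Sum>w\<in>bits b. op_tensor a A (op_tensor n B C) (z @ x @ w) (u1 @ u2 @ u3)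
            * cnj (op_tensor a A (op_tensor n B C) (z @ y @ w) (v1 @ v2 @ v3)))
      = (\<Sum>z\<in>bits a. \<Sum>w\<in>bits b.
           (cnj (A z v1) * A z u1) * (cnj (C w v3) * C w u3) * (B x u2 * cnj (B y v2)))"
    using assms(3-) by (intro sum.cong refl) (simp add: op_tensor_def mult_ac)
  also have "\<dots> = (\<Sum>z\<in>bits a. cnj (A z v1) * A z u1) * (\<Sum>w\<in>bits b. cnj (C w v3) * C w u3)
      * (B x u2 * cnj (B y v2))"
    by (subst sum_product) (simp add: sum_distrib_right)
  also have "\<dots> = (if v1 = u1 \<and> v3 = u3 then B x u2 * cnj (B y v2) else 0)"
    using assms unfolding unitary_op_def by simp
  finally show ?thesis .
qed

lemma partial_trace_apply_tensor:
  assumes "unitary_op a A" and "unitary_op b C" and "length x = n" and "length y = n"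
  shows "partial_trace a b (apply_op (a + n + b) (op_tensor a A (op_tensor n B C)) \<rho>) x y
       = apply_op n B (partial_trace a b \<rho>) x y"
proof -
  define G where "G = op_tensor a A (op_tensor n B C)"
  have "partial_trace a b (apply_op (a + n + b) G \<rho>) x y
      = (\<Sum>v\<in>bits (a + n + b). \<Sum>u\<in>bits (a + n + b). \<rho> u v *
           (\<Sum>z\<in>bits a. \<Sum>w\<in>bits b. G (z @ x @ w) u * cnj (G (z @ y @ w) v)))"
    unfolding partial_trace_def apply_op_entry
    by (subst sum_swap_pairs) (simp add: sum_distrib_left mult_ac)
  also have "\<dots> = (\<Sum>v1\<in>bits a. \<Sum>v2\<in>bits n. \<Sum>v3\<in>bits b. \<Sum>u2\<in>bits n.
           \<rho> (v1 @ u2 @ v3) (v1 @ v2 @ v3) * (B x u2 * cnj (B y v2)))"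
    unfolding sum_bits_append3 G_def using assms
    by (simp add: tensor3_trace_kernel if_distrib[of "\<lambda>t. _ * t"] sum_delta_first_last cong: if_cong)
  also have "\<dots> = (\<Sum>v2\<in>bits n. \<Sum>u2\<in>bits n. \<Sum>v1\<in>bits a. \<Sum>v3\<in>bits b.
           \<rho> (v1 @ u2 @ v3) (v1 @ v2 @ v3) * (B x u2 * cnj (B y v2)))"
    by (simp only: sum.swap[of _ "bits b" "bits n"] sum.swap[of _ "bits a" "bits n"])
  also have "\<dots> = apply_op n B (partial_trace a b \<rho>) x y"
    unfolding apply_op_entry partial_trace_def by (simp add: sum_distrib_left sum_distrib_right mult_ac)
  finally show ?thesis
    unfolding G_def .
qed

lemma partial_trace_level_state:
  assumes lev: "level g i = L1 @ [b] @ L2" and "1 \<le> i" and "i \<le> height g"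
  defines "a \<equiv> sum_list (map At L1)" and "c \<equiv> sum_list (map At L2)"
  shows "op_eq (At b) (partial_trace a c (level_state g \<rho> i)) (level_state b (partial_trace a c \<rho>) 1)"
proof -
  define \<rho>' where "\<rho>' = partial_trace a c \<rho>"
  have "height b + i \<le> height g + 1"
    using height_level[OF assms(2), of b g] is_atomic_simps[of b] assms(3) lev by auto
  have "op_eq (At b) (partial_trace a c (level_state g \<rho> i)) (level_state b \<rho>' (i - i + 1))"
    using assms(3)
  proof (rule inc_induct[where P = "\<lambda>k. op_eq (At b) (partial_trace a c (level_state g \<rho> k))
      (level_state b \<rho>' (k - i + 1))"])
    show "op_eq (At b) (partial_trace a c (level_state g \<rho> (height g)))
      (level_state b \<rho>' (height g - i + 1))"
      using \<open>height b + i \<le> height g + 1\<close> by (simp add: level_state_bottom \<rho>'_def)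
  next
    fix k assume "i \<le> k" and "k < height g"
      and IH: "op_eq (At b) (partial_trace a c (level_state g \<rho> (Suc k)))
        (level_state b \<rho>' (Suc k - i + 1))"
    define X Y Z where "X = (next_level ^^ (k - i)) L1" and "Y = level b (k - i + 1)"
      and "Z = (next_level ^^ (k - i)) L2"
    have "level g k = X @ Y @ Z"
      unfolding X_def Y_def Z_def using level_split[OF lev assms(2) \<open>i \<le> k\<close>] by simp
    moreover have "sum_list (map At X) = a" "sum_list (map At Y) = At b" "sum_list (map At Z) = c"
      by (simp_all add: X_def Y_def Z_def a_def c_def sum_At_next_level_pow sum_At_level)
    ultimately have gate: "level_gate id_perspective (level g k)
        = op_tensor a (level_gate id_perspective X)
            (op_tensor (At b) (level_gate id_perspective Y) (level_gate id_perspective Z))"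
      and At_g: "At g = a + At b + c"
      using sum_At_level[of g k] by (simp_all add: level_gate_append)
    have "op_eq (At b) (partial_trace a c (level_state g \<rho> k))
        (apply_op (At b) (level_gate id_perspective Y) (partial_trace a c (level_state g \<rho> (Suc k))))"
      unfolding op_eq_def level_state_step[OF \<open>k < height g\<close>] gate At_g
      using unitary_op_level_gate[of X] unitary_op_level_gate[of Z]
        \<open>sum_list (map At X) = a\<close> \<open>sum_list (map At Z) = c\<close>
      by (simp add: partial_trace_apply_tensor)
    also have "\<dots> = apply_op (At b) (level_gate id_perspective Y) (level_state b \<rho>' (Suc k - i + 1))"
      by (rule apply_op_cong[OF IH])
    also have "op_eq (At b) \<dots> (level_state b \<rho>' (k - i + 1))"
      using level_state_step_op_eq[of b \<rho>' "k - i + 1"] \<open>i \<le> k\<close>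
      by (simp add: Y_def Suc_diff_le op_eq_sym)
    finally show "op_eq (At b) (partial_trace a c (level_state g \<rho> k)) (level_state b \<rho>' (k - i + 1))" .
  qed
  then show ?thesis
    by (simp add: \<rho>'_def)
qed

section \<open>Fair-coin mixtures\<close>

definition coin_mixture :: "(bool \<Rightarrow> bool list) \<Rightarrow> qop" where
  "coin_mixture us = (\<lambda>x y. (\<Sum>c\<in>UNIV. if x = us c \<and> y = us c then 1 else 0) / 2)"

lemma coin_mixture_entry:
  "coin_mixture us x y
   = ((if x = us False \<and> y = us False then 1 else 0) + (if x = us True \<and> y = us True then 1 else 0)) / 2"
  by (simp add: coin_mixture_def UNIV_bool add.commute)

lemma coin_mixture_flip: "coin_mixture (\<lambda>c. us (c \<noteq> d)) = coin_mixture us"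
  by (cases d) (simp_all add: coin_mixture_entry add.commute fun_eq_iff)

lemma density_coin_mixture:
  assumes "\<And>c. length (us c) = n"
  shows "density n (coin_mixture us)"
proof -
  have form: "(\<Sum>x\<in>bits n. \<Sum>y\<in>bits n. cnj (v x) * coin_mixture us x y * v y)
      = (\<Sum>c\<in>UNIV. cnj (v (us c)) * v (us c)) / 2" for v
  proof -
    have "(\<Sum>x\<in>bits n. \<Sum>y\<in>bits n. cnj (v x) * coin_mixture us x y * v y)
       = (\<Sum>c\<in>UNIV. \<Sum>x\<in>bits n. \<Sum>y\<in>bits n. if x = us c \<and> y = us c then cnj (v x) * v y / 2 else 0)"
      unfolding coin_mixture_def
      by (simp add: sum_distrib_left sum_distrib_right sum_divide_distrib sum.swap[of _ "bits n" UNIV]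
          if_distrib[of "\<lambda>t. _ * t"] if_distrib[of "\<lambda>t. t * _"] if_distrib[of "\<lambda>t. t / _"] cong: if_cong)
    also have "\<dots> = (\<Sum>c\<in>UNIV. cnj (v (us c)) * v (us c)) / 2"
      using assms by (simp add: sum_delta_pair sum_divide_distrib)
    finally show ?thesis .
  qed
  have "cnj z * z = complex_of_real ((Re z)\<^sup>2 + (Im z)\<^sup>2)" for z
    by (simp add: complex_mult_cnj mult.commute)
  then have "Im (\<Sum>x\<in>bits n. \<Sum>y\<in>bits n. cnj (v x) * coin_mixture us x y * v y) = 0 \<and>
      Re (\<Sum>x\<in>bits n. \<Sum>y\<in>bits n. cnj (v x) * coin_mixture us x y * v y) \<ge> 0" for v
    unfolding form by (simp add: UNIV_bool)
  moreover have "op_trace n (coin_mixture us) = 1"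
    using assms by (simp add: op_trace_def coin_mixture_entry sum.distrib sum_divide_distrib[symmetric])
  moreover have "coin_mixture us x y = cnj (coin_mixture us y x)" for x y
    by (auto simp: coin_mixture_entry)
  ultimately show ?thesis
    unfolding density_def by blast
qed

lemma partial_trace_coin_mixture:
  assumes "\<And>c. length (P c) = a" and "\<And>c. length (M c) = n" and "\<And>c. length (Q c) = b"
    and "length x = n" and "length y = n"
  shows "partial_trace a b (coin_mixture (\<lambda>c. P c @ M c @ Q c)) x y = coin_mixture M x y"
proof -
  have "partial_trace a b (coin_mixture (\<lambda>c. P c @ M c @ Q c)) x y
      = (\<Sum>c\<in>UNIV. \<Sum>z\<in>bits a. \<Sum>w\<in>bits b.
           if z = P c \<and> w = Q c then (if x = M c \<and> y = M c then 1 else 0) / 2 else 0)"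
    unfolding partial_trace_def coin_mixture_def using assms
    by (simp add: sum_divide_distrib sum.swap[of _ _ UNIV] cong: if_cong) (intro sum.cong refl; auto)
  also have "\<dots> = coin_mixture M x y"
    using assms by (simp add: sum_delta_pair coin_mixture_def sum_divide_distrib)
  finally show ?thesis .
qed

lemma apply_perm_op_coin_mixture:
  assumes "\<And>c. length (us c) = n" and "op_eq n G (perm_op f)"
  shows "op_eq n (apply_op n G (coin_mixture us)) (coin_mixture (\<lambda>c. f (us c)))"
proof -
  have "(if x = f w then 1 else 0) * coin_mixture us w z * cnj (if y = f z then 1 else 0)
      = ((if z = us False \<and> w = us False then if x = f w \<and> y = f z then 1 else 0 else 0)
       + (if z = us True \<and> w = us True then if x = f w \<and> y = f z then 1 else 0 else 0)) / 2"
    for x y z w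
    by (cases "x = f w"; cases "y = f z"; cases "z = us False"; cases "w = us False";
        cases "z = us True"; cases "w = us True") (simp_all add: coin_mixture_entry)
  then have "apply_op n (perm_op f) (coin_mixture us) x y = coin_mixture (\<lambda>c. f (us c)) x y" for x y
    using assms(1) unfolding apply_op_entry perm_op_def
    by (simp add: sum.distrib sum_divide_distrib[symmetric] sum_delta_pair coin_mixture_entry)
  then have "apply_op n (perm_op f) (coin_mixture us) = coin_mixture (\<lambda>c. f (us c))"
    by (intro ext)
  then show ?thesis
    using apply_op_cong_gate[OF assms(2), of "coin_mixture us"] by simp
qed

lemma proj_id_perspective:
  assumes "x \<in> bits n" and "z \<in> bits n"
  shows "proj1 n id_perspective x z = (if x = z \<and> last x then 1 else 0)"
    and "proj0 n id_perspective x z = (if x = z \<and> \<not> last x then 1 else 0)"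
proof -
  have "(\<Sum>w\<in>{w \<in> bits n. P w}. tp_power id_perspective x w * cnj (tp_power id_perspective z w))
      = (if x = z \<and> P x then 1 else 0)" for P
  proof -
    have "(\<Sum>w\<in>{w \<in> bits n. P w}. tp_power id_perspective x w * cnj (tp_power id_perspective z w))
        = (\<Sum>w\<in>{w \<in> bits n. P w}. if x = w then (if z = w then 1 else 0) else 0)"
      using assms by (intro sum.cong refl) (auto simp: tp_power_id_perspective)
    also have "\<dots> = (if x \<in> {w \<in> bits n. P w} then (if z = x then 1 else 0) else 0)"
      by (rule sum.delta'[OF finite_subset[OF _ finite_bits[of n]]]) blast
    finally show ?thesis
      using assms by auto
  qed
  from this[of last] this[of "\<lambda>w. \<not> last w"]
  show "proj1 n id_perspective x z = (if x = z \<and> last x then 1 else 0)"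
    and "proj0 n id_perspective x z = (if x = z \<and> \<not> last x then 1 else 0)"
    by (simp_all add: proj1_def proj0_def)
qed

lemma prob_coin_mixture:
  assumes "\<And>c. length (ws c) = n"
  shows "prob n id_perspective (coin_mixture ws)
    = (of_bool (last (ws False)) + of_bool (last (ws True))) / 2"
proof -
  have "op_trace n (op_mult n (proj1 n id_perspective) (coin_mixture ws))
      = (\<Sum>x\<in>bits n. if last x then coin_mixture ws x x else 0)"
    unfolding op_trace_def op_mult_def by (intro sum.cong refl) (simp add: proj_id_perspective)
  also have "\<dots> = (\<Sum>x\<in>bits n.
      ((if x = ws False then of_bool (last x) else 0) + (if x = ws True then of_bool (last x) else 0)) / 2)"
    by (intro sum.cong refl) (auto simp: coin_mixture_entry)
  also have "\<dots> = (of_bool (last (ws False)) + of_bool (last (ws True))) / 2"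
    using assms by (simp add: sum.distrib sum_divide_distrib[symmetric])
  finally have trace: "op_trace n (op_mult n (proj1 n id_perspective) (coin_mixture ws))
      = (of_bool (last (ws False)) + of_bool (last (ws True))) / 2" .
  show ?thesis
    unfolding prob_def trace by (cases "last (ws False)"; cases "last (ws True)") simp_all
qed

lemma proj_1_id_perspective:
  shows "op_eq 1 (proj0 1 id_perspective) (coin_mixture (\<lambda>c. [False]))"
    and "op_eq 1 (proj1 1 id_perspective) (coin_mixture (\<lambda>c. [True]))"
  unfolding op_eq_def
  by (auto dest!: length_Suc_0_cases simp: proj_id_perspective coin_mixture_entry)

section \<open>Seeded holistic models\<close>

definition is_var :: "form \<Rightarrow> bool" where
  "is_var l = (case l of Atom _ \<Rightarrow> True | _ \<Rightarrow> False)"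

definition leaf_bit :: "form \<Rightarrow> bool \<Rightarrow> bool \<Rightarrow> bool" where
  "leaf_bit l s c = (case l of Atom _ \<Rightarrow> c \<noteq> s | Tr \<Rightarrow> True | _ \<Rightarrow> False)"

definition leaf_bits :: "form list \<Rightarrow> bool list \<Rightarrow> bool \<Rightarrow> bool list" where
  "leaf_bits ls ss c = map2 (\<lambda>l s. leaf_bit l s c) ls ss"

lemma length_leaf_bits: "length (leaf_bits ls ss c) = min (length ls) (length ss)"
  by (simp add: leaf_bits_def)

lemma leaf_bits_append:
  "length ls = length ss \<Longrightarrow> leaf_bits (ls @ ls') (ss @ ss') c = leaf_bits ls ss c @ leaf_bits ls' ss' c"
  by (simp add: leaf_bits_def)

definition seed_equiv :: "form list \<Rightarrow> bool list \<Rightarrow> bool list \<Rightarrow> bool" where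
  "seed_equiv ls s t \<longleftrightarrow> length s = length ls \<and> length t = length ls \<and>
     (\<exists>d. \<forall>k<length ls. is_var (ls ! k) \<longrightarrow> t ! k = (s ! k \<noteq> d))"

lemma coin_mixture_seed_equiv:
  assumes "seed_equiv ls s t"
  shows "coin_mixture (leaf_bits ls s) = coin_mixture (leaf_bits ls t)"
proof -
  obtain d where d: "\<forall>k<length ls. is_var (ls ! k) \<longrightarrow> t ! k = (s ! k \<noteq> d)"
    and len: "length s = length ls" "length t = length ls"
    using assms unfolding seed_equiv_def by blast
  have "leaf_bits ls t c = leaf_bits ls s (c \<noteq> d)" for c
  proof (rule nth_equalityI)
    fix k assume "k < length (leaf_bits ls t c)"
    with len d show "leaf_bits ls t c ! k = leaf_bits ls s (c \<noteq> d) ! k"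
      by (cases "ls ! k") (auto simp: leaf_bits_def leaf_bit_def is_var_def length_leaf_bits)
  qed (simp add: len length_leaf_bits)
  then have "leaf_bits ls t = (\<lambda>c. leaf_bits ls s (c \<noteq> d))"
    by (intro ext)
  then show ?thesis
    by (simp only: coin_mixture_flip)
qed

fun expand_offsets :: "form \<Rightarrow> nat \<Rightarrow> (form \<times> nat) list" where
  "expand_offsets (Neg a) k = [(a, k)]"
| "expand_offsets (SqId a) k = [(a, k)]"
| "expand_offsets (SqNeg a) k = [(a, k)]"
| "expand_offsets (Xor a b) k = [(a, k), (b, k + At a)]"
| "expand_offsets (Tof a b c) k = [(a, k), (b, k + At a), (c, k + At a + At b)]"
| "expand_offsets x k = [(x, k)]"

definition next_level_offsets :: "(form \<times> nat) list \<Rightarrow> (form \<times> nat) list" where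
  "next_level_offsets pl = concat (map (\<lambda>(f, k). expand_offsets f k) pl)"

definition level_offsets :: "form \<Rightarrow> nat \<Rightarrow> (form \<times> nat) list" where
  "level_offsets g i = (next_level_offsets ^^ (i - 1)) [(g, 0)]"

fun contiguous_from :: "nat \<Rightarrow> (form \<times> nat) list \<Rightarrow> bool" where
  "contiguous_from k [] = True"
| "contiguous_from k ((f, k') # pl) = (k' = k \<and> contiguous_from (k + At f) pl)"

fun subterm_offsets :: "form \<Rightarrow> nat \<Rightarrow> (form \<times> nat) list" where
  "subterm_offsets (Neg a) k = (Neg a, k) # subterm_offsets a k"
| "subterm_offsets (SqId a) k = (SqId a, k) # subterm_offsets a k"
| "subterm_offsets (SqNeg a) k = (SqNeg a, k) # subterm_offsets a k"
| "subterm_offsets (Xor a b) k = (Xor a b, k) # subterm_offsets a k @ subterm_offsets b (k + At a)"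
| "subterm_offsets (Tof a b c) k =
     (Tof a b c, k) # subterm_offsets a k @ subterm_offsets b (k + At a)
       @ subterm_offsets c (k + At a + At b)"
| "subterm_offsets x k = [(x, k)]"

definition occ_offset :: "form \<Rightarrow> nat \<times> nat \<Rightarrow> nat" where
  "occ_offset g p = sum_list (map At (take (snd p) (level g (fst p))))"

lemma map_fst_level_offsets: "map fst (level_offsets g i) = level g i"
proof -
  have "map fst (expand_offsets f k) = expand f" for f k
    by (cases f) auto
  then have "map fst (next_level_offsets pl) = next_level (map fst pl)" for pl
    by (induction pl) (auto simp: next_level_offsets_def next_level_def)
  then have "map fst ((next_level_offsets ^^ k) pl) = (next_level ^^ k) (map fst pl)" for k pl
    by (induction k) simp_all
  then show ?thesis
    by (simp add: level_offsets_def level_def)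
qed

lemma contiguous_level_offsets: "contiguous_from 0 (level_offsets g i)"
proof -
  have append: "contiguous_from k (xs @ ys)
      \<longleftrightarrow> contiguous_from k xs \<and> contiguous_from (k + sum_list (map (At \<circ> fst) xs)) ys"
    for k xs ys
    by (induction xs arbitrary: k) (auto simp: add.assoc)
  have "contiguous_from k (expand_offsets f k) \<and> sum_list (map (At \<circ> fst) (expand_offsets f k)) = At f"
    for f k
    by (cases f) (auto simp: add.assoc)
  then have "contiguous_from k pl \<Longrightarrow> contiguous_from k (next_level_offsets pl)" for k pl
    by (induction pl arbitrary: k) (auto simp: next_level_offsets_def append)
  then have "contiguous_from 0 ((next_level_offsets ^^ k) [(g, 0)])" for k
    by (induction k) simp_all
  then show ?thesis
    by (simp add: level_offsets_def)
qed

lemma contiguous_from_nth: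
  "contiguous_from k pl \<Longrightarrow> j < length pl \<Longrightarrow> snd (pl ! j) = k + sum_list (map At (take j (map fst pl)))"
proof (induction k pl arbitrary: j rule: contiguous_from.induct)
  case (2 k f k' pl)
  then show ?case
    by (cases j) (auto simp: add.assoc)
qed simp

lemma level_offsets_subterms:
  "p \<in> set (level_offsets g i) \<Longrightarrow> set (subterm_offsets (fst p) (snd p)) \<subseteq> set (subterm_offsets g 0)"
proof -
  have "q \<in> set (expand_offsets f k) \<Longrightarrow> set (subterm_offsets (fst q) (snd q)) \<subseteq> set (subterm_offsets f k)"
    for q f k
    by (cases f) auto
  then have "\<forall>p\<in>set ((next_level_offsets ^^ k) [(g, 0)]).
      set (subterm_offsets (fst p) (snd p)) \<subseteq> set (subterm_offsets g 0)" for k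
    by (induction k) (fastforce simp: next_level_offsets_def)+
  then show "p \<in> set (level_offsets g i) \<Longrightarrow> ?thesis"
    by (simp add: level_offsets_def)
qed

lemma occ_subterm_offsets:
  assumes "occ g b p"
  shows "(b, occ_offset g p) \<in> set (subterm_offsets g 0)"
proof -
  obtain i j where p: "p = (i, j)" by (cases p)
  let ?pl = "level_offsets g i"
  have j: "j < length ?pl" and b: "fst (?pl ! j) = b"
    using assms map_fst_level_offsets[of g i] unfolding p occ_def
    by (metis fst_conv snd_conv length_map nth_map)+
  have "snd (?pl ! j) = occ_offset g p"
    using contiguous_from_nth[OF contiguous_level_offsets j] map_fst_level_offsets[of g i]
    by (simp add: occ_offset_def p)
  moreover have "(fst (?pl ! j), snd (?pl ! j)) \<in> set (subterm_offsets (fst (?pl ! j)) (snd (?pl ! j)))"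
    by (cases "fst (?pl ! j)") auto
  ultimately show ?thesis
    using level_offsets_subterms[OF nth_mem[OF j]] b by auto
qed

lemma subterm_offsets_bound: "(f, k') \<in> set (subterm_offsets g k) \<Longrightarrow> k \<le> k' \<and> k' + At f \<le> k + At g"
  by (induction g k rule: subterm_offsets.induct) auto

definition coherent_seed :: "form \<Rightarrow> bool list \<Rightarrow> bool" where
  "coherent_seed g s \<longleftrightarrow> (\<forall>(b, k)\<in>set (subterm_offsets g 0). \<forall>(b', k')\<in>set (subterm_offsets g 0).
     b = b' \<longrightarrow> seed_equiv (leaves b) (take (At b) (drop k s)) (take (At b) (drop k' s)))"

definition seeded_model :: "(form \<Rightarrow> bool list) \<Rightarrow> form \<Rightarrow> nat \<Rightarrow> qop" where
  "seeded_model S g i = level_state g (coin_mixture (leaf_bits (leaves g) (S g))) i"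

abbreviation seed_segment :: "(form \<Rightarrow> bool list) \<Rightarrow> form \<Rightarrow> form \<Rightarrow> nat \<times> nat \<Rightarrow> bool list" where
  "seed_segment S g b p \<equiv> take (At b) (drop (occ_offset g p) (S g))"

lemma partial_trace_seed_mixture:
  assumes "length (S g) = At g" and lev: "level g i = L1 @ [b] @ L2"
  defines "a \<equiv> sum_list (map At L1)" and "c \<equiv> sum_list (map At L2)"
  shows "op_eq (At b) (partial_trace a c (coin_mixture (leaf_bits (leaves g) (S g))))
           (coin_mixture (leaf_bits (leaves b) (take (At b) (drop a (S g)))))"
proof -
  define S1 Sb S3 where "S1 = take a (S g)" and "Sb = take (At b) (drop a (S g))"
    and "S3 = drop (a + At b) (S g)"
  have At_g: "At g = a + At b + c"
    using sum_At_level[of g i] unfolding lev a_def c_def by simp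
  have "leaves g = concat (map leaves L1) @ leaves b @ concat (map leaves L2)"
    using concat_leaves_level[of g i] unfolding lev by simp
  moreover have "S g = S1 @ Sb @ S3"
    unfolding S1_def Sb_def S3_def by (metis append_take_drop_id drop_drop add.commute)
  moreover have "length S1 = a" and "length Sb = At b" and "length S3 = c"
    using assms(1) At_g by (simp_all add: S1_def Sb_def S3_def)
  ultimately have split: "leaf_bits (leaves g) (S g) = (\<lambda>c'. leaf_bits (concat (map leaves L1)) S1 c'
      @ leaf_bits (leaves b) Sb c' @ leaf_bits (concat (map leaves L2)) S3 c')"
    by (simp add: fun_eq_iff leaf_bits_append length_concat_leaves length_leaves a_def)
  show ?thesis
    unfolding op_eq_def split Sb_def[symmetric]
    using \<open>length S1 = a\<close> \<open>length Sb = At b\<close> \<open>length S3 = c\<close>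
    by (intro ballI partial_trace_coin_mixture)
      (simp_all add: length_leaf_bits length_leaves length_concat_leaves a_def c_def)
qed

lemma ctx_seeded_model:
  assumes "length (S g) = At g" and "occ g b p"
  shows "op_eq (At b) (ctx (seeded_model S) g p)
           (level_state b (coin_mixture (leaf_bits (leaves b) (seed_segment S g b p))) 1)"
proof -
  obtain i j where p: "p = (i, j)" by (cases p)
  define L1 L2 where "L1 = take j (level g i)" and "L2 = drop (Suc j) (level g i)"
  define a c where "a = sum_list (map At L1)" and "c = sum_list (map At L2)"
  have "1 \<le> i" "i \<le> height g" and j: "j < length (level g i)" "level g i ! j = b"
    using assms(2) by (auto simp: occ_def p)
  then have lev: "level g i = L1 @ [b] @ L2"
    unfolding L1_def L2_def by (metis append_Cons append_Nil id_take_nth_drop)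
  have "op_eq (At b) (ctx (seeded_model S) g p)
      (partial_trace a c (level_state g (coin_mixture (leaf_bits (leaves g) (S g))) i))"
    unfolding ctx_def seeded_model_def red_eq_partial_trace a_def c_def L1_def L2_def p
    by (simp add: take_map drop_map)
  also have "op_eq (At b) \<dots>
      (level_state b (partial_trace a c (coin_mixture (leaf_bits (leaves g) (S g)))) 1)"
    unfolding a_def c_def by (rule partial_trace_level_state[OF lev \<open>1 \<le> i\<close> \<open>i \<le> height g\<close>])
  also have "op_eq (At b) \<dots>
      (level_state b (coin_mixture (leaf_bits (leaves b) (seed_segment S g b p))) 1)"
    using partial_trace_seed_mixture[of S g, OF assms(1) lev] unfolding a_def c_def
    by (intro level_state_cong) (simp add: occ_offset_def p L1_def)
  finally show ?thesis .
qed

lemma ctx_seeded_model_coherent: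
  assumes "length (S g) = At g" and "coherent_seed g (S g)" and "occ g b p" and "occ g b q"
  shows "op_eq (At b) (ctx (seeded_model S) g p) (ctx (seeded_model S) g q)"
proof -
  have "seed_equiv (leaves b) (seed_segment S g b p) (seed_segment S g b q)"
    using assms(2) occ_subterm_offsets[OF assms(3)] occ_subterm_offsets[OF assms(4)]
    unfolding coherent_seed_def by fastforce
  then have "coin_mixture (leaf_bits (leaves b) (seed_segment S g b p))
      = coin_mixture (leaf_bits (leaves b) (seed_segment S g b q))"
    by (rule coin_mixture_seed_equiv)
  then show ?thesis
    using ctx_seeded_model[of S g b p, OF assms(1,3)] ctx_seeded_model[of S g b q, OF assms(1,4)]
    by (metis op_eq_sym op_eq_trans)
qed

lemma ctx_seeded_model_constant:
  assumes "length (S g) = At g" and "occ g b p" and "b = Fa \<or> b = Tr"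
  shows "op_eq 1 (ctx (seeded_model S) g p) (coin_mixture (\<lambda>c. [b = Tr]))"
proof -
  have "occ_offset g p < length (S g)"
    using subterm_offsets_bound[OF occ_subterm_offsets[OF assms(2)]] assms(1,3) by auto
  then have "seed_segment S g b p = [S g ! occ_offset g p]"
    using assms(3) by (auto simp: take_Suc_conv_app_nth)
  then have "level_state b (coin_mixture (leaf_bits (leaves b) (seed_segment S g b p))) 1
      = coin_mixture (\<lambda>c. [b = Tr])"
    using assms(3) by (auto simp: level_state_bottom leaf_bits_def[abs_def] leaf_bit_def)
  then show ?thesis
    using ctx_seeded_model[of S g b p, OF assms(1,2)] assms(3) by auto
qed

theorem holistic_model_seeded_model:
  assumes "\<And>g. length (S g) = At g" and "\<And>g. coherent_seed g (S g)"
  shows "holistic_model id_perspective (seeded_model S)"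
  unfolding holistic_model_def
proof (intro conjI allI impI)
  fix g i
  show "density (At g) (seeded_model S g i)"
    unfolding seeded_model_def using assms(1)
    by (intro density_level_state density_coin_mixture) (simp add: length_leaf_bits length_leaves)
  assume "1 \<le> i \<and> i < height g"
  then show "op_eq (At g) (seeded_model S g i)
      (apply_op (At g) (level_gate id_perspective (level g i)) (seeded_model S g (Suc i)))"
    by (simp add: seeded_model_def level_state_step)
next
  fix g b p q
  assume "occ g b p \<and> occ g b q"
  then show "op_eq (At b) (ctx (seeded_model S) g p) (ctx (seeded_model S) g q)"
    using ctx_seeded_model_coherent assms by blast
next
  fix g p
  assume "occ g Fa p"
  then show "op_eq 1 (ctx (seeded_model S) g p) (proj0 1 id_perspective)"
    using ctx_seeded_model_constant[of S g Fa p, OF assms(1)] proj_1_id_perspective(1)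
    by (auto intro: op_eq_trans op_eq_sym)
next
  fix g p
  assume "occ g Tr p"
  then show "op_eq 1 (ctx (seeded_model S) g p) (proj1 1 id_perspective)"
    using ctx_seeded_model_constant[of S g Tr p, OF assms(1)] proj_1_id_perspective(2)
    by (auto intro: op_eq_trans op_eq_sym)
qed

section \<open>Classical formulas\<close>

fun classical :: "form \<Rightarrow> bool" where
  "classical (SqId a) = False"
| "classical (SqNeg a) = False"
| "classical (Neg a) = classical a"
| "classical (Xor a b) = (classical a \<and> classical b)"
| "classical (Tof a b c) = (classical a \<and> classical b \<and> classical c)"
| "classical _ = True"

fun node_map :: "form \<Rightarrow> bool list \<Rightarrow> bool list" where
  "node_map (Neg a) = not_map"
| "node_map (Xor a b) = xor_map (At a)"
| "node_map (Tof a b c) = toffoli_map (At a) (At b)"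
| "node_map _ = id"

fun level_map :: "form list \<Rightarrow> bool list \<Rightarrow> bool list" where
  "level_map [] y = []"
| "level_map (b # l) y = node_map b (take (At b) y) @ level_map l (drop (At b) y)"

fun classical_evolve :: "form \<Rightarrow> nat \<Rightarrow> bool list \<Rightarrow> bool list" where
  "classical_evolve g 0 = id"
| "classical_evolve g (Suc d) = level_map (level g (height g - Suc d)) \<circ> classical_evolve g d"

definition classical_value :: "form \<Rightarrow> bool list \<Rightarrow> bool" where
  "classical_value a x = last (classical_evolve a (height a - 1) x)"

lemma classical_level: "classical g \<Longrightarrow> x \<in> set (level g i) \<Longrightarrow> classical x"
proof -
  assume "classical g"
  have "classical b \<Longrightarrow> x \<in> set (expand b) \<Longrightarrow> classical x" for b x
    by (cases b) auto
  then have "\<forall>x\<in>set ((next_level ^^ k) [g]). classical x" for k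
    using \<open>classical g\<close> by (induction k) (auto simp: next_level_def)
  then show "x \<in> set (level g i) \<Longrightarrow> classical x"
    by (simp add: level_def)
qed

lemma length_node_map:
  assumes "length y = At b"
  shows "length (node_map b y) = At b"
proof (cases b)
  case (Neg a)
  then show ?thesis using assms At_pos[of a] by (simp add: not_map_def)
next
  case (Xor a c)
  then show ?thesis using assms At_pos[of c] by (simp add: xor_map_def)
next
  case (Tof a c d)
  then show ?thesis using assms At_pos[of d] by (simp add: toffoli_map_def)
qed (use assms in simp_all)

lemma length_level_map: "length y = sum_list (map At l) \<Longrightarrow> length (level_map l y) = length y"
  by (induction l arbitrary: y) (auto simp: length_node_map)

lemma node_gate_perm_op: "classical b \<Longrightarrow> op_eq (At b) (node_gate id_perspective b) (perm_op (node_map b))"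
  by (cases b) (auto simp: NOT_gate_perm_op XOR_gate_perm_op Toffoli_gate_perm_op perm_op_id
      conj_gate_id_perspective)

lemma op_tensor_perm_op:
  assumes "op_eq m A (perm_op f)" and "op_eq k B (perm_op h)" and "\<And>y. length y = m \<Longrightarrow> length (f y) = m"
  shows "op_eq (m + k) (op_tensor m A B) (perm_op (\<lambda>y. f (take m y) @ h (drop m y)))"
  unfolding op_eq_def
proof (intro ballI)
  fix x y assume "x \<in> bits (m + k)" and "y \<in> bits (m + k)"
  then have "(take m x = f (take m y) \<and> drop m x = h (drop m y)) = (x = f (take m y) @ h (drop m y))"
    using assms(3)[of "take m y"] append_eq_conv_conj[of "f (take m y)" "h (drop m y)" x] by auto
  moreover have "A (take m x) (take m y) = (if take m x = f (take m y) then 1 else 0)"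
    and "B (drop m x) (drop m y) = (if drop m x = h (drop m y) then 1 else 0)"
    using assms(1,2) \<open>x \<in> bits (m + k)\<close> \<open>y \<in> bits (m + k)\<close> by (simp_all add: op_eq_def perm_op_def)
  ultimately show "op_tensor m A B x y = perm_op (\<lambda>y. f (take m y) @ h (drop m y)) x y"
    unfolding op_tensor_def perm_op_def by (auto simp del: if_one_zero_mult)
qed

lemma level_gate_perm_op:
  "\<forall>b\<in>set l. classical b
    \<Longrightarrow> op_eq (sum_list (map At l)) (level_gate id_perspective l) (perm_op (level_map l))"
proof (induction l)
  case Nil
  then show ?case
    by (simp add: level_gate_def op_id_def perm_op_def op_eq_def)
next
  case (Cons b l)
  then have "op_eq (At b + sum_list (map At l))
      (op_tensor (At b) (node_gate id_perspective b) (level_gate id_perspective l))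
      (perm_op (\<lambda>y. node_map b (take (At b) y) @ level_map l (drop (At b) y)))"
    by (intro op_tensor_perm_op node_gate_perm_op length_node_map) simp_all
  then show ?case
    by (simp add: level_gate_def)
qed

lemma evolve_coin_mixture:
  assumes "classical g" and "\<And>c. length (us c) = At g"
  shows "op_eq (At g) (evolve g (coin_mixture us) d) (coin_mixture (\<lambda>c. classical_evolve g d (us c)))
    \<and> (\<forall>c. length (classical_evolve g d (us c)) = At g)"
proof (induction d)
  case 0
  then show ?case using assms(2) by simp
next
  case (Suc d)
  let ?L = "level g (height g - Suc d)"
  have perm: "op_eq (At g) (level_gate id_perspective ?L) (perm_op (level_map ?L))"
    using level_gate_perm_op[of ?L] classical_level[OF assms(1)] by (simp add: sum_At_level)
  have "op_eq (At g) (evolve g (coin_mixture us) (Suc d))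
      (apply_op (At g) (level_gate id_perspective ?L) (coin_mixture (\<lambda>c. classical_evolve g d (us c))))"
    using apply_op_cong[OF Suc.IH[THEN conjunct1]] by simp
  also have "op_eq (At g) \<dots> (coin_mixture (\<lambda>c. classical_evolve g (Suc d) (us c)))"
    using apply_perm_op_coin_mixture[OF _ perm] Suc.IH by simp
  finally show ?case
    using Suc.IH length_level_map[of _ ?L] by (simp add: sum_At_level)
qed

definition seeded_prob :: "form \<Rightarrow> bool list \<Rightarrow> form \<Rightarrow> nat \<times> nat \<Rightarrow> real" where
  "seeded_prob g s a p =
     (let us = leaf_bits (leaves a) (take (At a) (drop (occ_offset g p) s))
      in (of_bool (classical_value a (us False)) + of_bool (classical_value a (us True))) / 2)"

lemma prob_hol_mean_seeded_model:
  assumes "\<And>g. length (S g) = At g" and "\<And>g. coherent_seed g (S g)"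
    and "occ g a p" and "classical a"
  shows "prob (At a) id_perspective (hol_mean (seeded_model S) g a) = seeded_prob g (S g) a p"
proof -
  define us where "us = leaf_bits (leaves a) (seed_segment S g a p)"
  have "occ_offset g p + At a \<le> length (S g)"
    using subterm_offsets_bound[OF occ_subterm_offsets[OF assms(3)]] assms(1) by simp
  then have len: "length (us c) = At a" for c
    by (simp add: us_def length_leaf_bits length_leaves)
  have "op_eq (At a) (hol_mean (seeded_model S) g a) (ctx (seeded_model S) g p)"
    unfolding hol_mean_def using ctx_seeded_model_coherent[of S g, OF assms(1,2)] assms(3)
    by (metis someI)
  also have "op_eq (At a) \<dots> (evolve a (coin_mixture us) (height a - 1))"
    using ctx_seeded_model[of S g a p, OF assms(1,3)] by (simp add: us_def level_state_def)
  also have "op_eq (At a) \<dots> (coin_mixture (\<lambda>c. classical_evolve a (height a - 1) (us c)))"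
    using evolve_coin_mixture[where us = us, OF assms(4) len] by blast
  finally have "prob (At a) id_perspective (hol_mean (seeded_model S) g a)
      = prob (At a) id_perspective (coin_mixture (\<lambda>c. classical_evolve a (height a - 1) (us c)))"
    unfolding prob_def op_trace_def op_mult_def op_eq_def by simp
  also have "\<dots> = (of_bool (classical_value a (us False)) + of_bool (classical_value a (us True))) / 2"
    using evolve_coin_mixture[where us = us, OF assms(4) len]
    by (simp add: prob_coin_mixture classical_value_def)
  finally show ?thesis
    unfolding seeded_prob_def us_def Let_def .
qed

lemma coherent_seed_replicate: "coherent_seed g (replicate (At g) False)"
  unfolding coherent_seed_def
proof (intro ballI, clarify)
  fix b k k' assume "(b, k) \<in> set (subterm_offsets g 0)" and "(b, k') \<in> set (subterm_offsets g 0)"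
  then have "take (At b) (drop k (replicate (At g) False)) = replicate (At b) False"
    and "take (At b) (drop k' (replicate (At g) False)) = replicate (At b) False"
    using subterm_offsets_bound by (fastforce simp: min_def)+
  then show "seed_equiv (leaves b) (take (At b) (drop k (replicate (At g) False)))
      (take (At b) (drop k' (replicate (At g) False)))"
    by (auto simp: seed_equiv_def length_leaves)
qed

lemma not_entails_by_seed:
  assumes "length s = At g" and "coherent_seed g s"
    and "occ g a p" and "classical a" and "occ g b q" and "classical b"
    and "seeded_prob g s b q < seeded_prob g s a p"
  shows "\<not> entails a b"
proof -
  define S where "S h = (if h = g then s else replicate (At h) False)" for h
  have len: "length (S h) = At h" and coh: "coherent_seed h (S h)" for h
    using assms(1,2) coherent_seed_replicate[of h] by (simp_all add: S_def)
  have "prob (At b) id_perspective (hol_mean (seeded_model S) g b)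
      < prob (At a) id_perspective (hol_mean (seeded_model S) g a)"
    using prob_hol_mean_seeded_model[of S g a p, OF len coh assms(3,4)]
      prob_hol_mean_seeded_model[of S g b q, OF len coh assms(5,6)] assms(7)
    by (simp add: S_def)
  moreover have "subformula a g" and "subformula b g"
    using assms(3,5) unfolding subformula_def by blast+
  ultimately show ?thesis
    unfolding entails_def using holistic_model_seeded_model[OF len coh] unitary2_id_perspective
    by (meson not_le)
qed

lemma not_entails_by_Xor_seed:
  assumes "length s = At a + At b" and "coherent_seed (Xor a b) s" and "classical a" and "classical b"
    and "seeded_prob (Xor a b) s b (2, 1) < seeded_prob (Xor a b) s a (2, 0)"
  shows "\<not> entails a b"
proof (rule not_entails_by_seed)
  have "level (Xor a b) 2 = [a, b]" and "height (Xor a b) \<ge> 2"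
    using height_pos[of a] by (simp_all add: level_def next_level_def numeral_2_eq_2)
  then show "occ (Xor a b) a (2, 0)" and "occ (Xor a b) b (2, 1)"
    by (simp_all add: occ_def)
qed (use assms in simp_all)

lemma entails_refl: "entails a a"
  by (simp add: entails_def)

lemma not_entails_Conj_idem: "\<not> entails (Atom 0) (Conj (Atom 0) (Atom 0))"
  by (rule not_entails_by_seed[where g = "Conj (Atom 0) (Atom 0)" and s = "[False, True, False]"
        and p = "(2, 0)" and q = "(1, 0)"]) code_simp+

lemma not_entails_Conj_Neg_Fa: "\<not> entails (Conj (Atom 0) (Neg (Atom 0))) Fa"
  by (rule not_entails_by_seed[where g = "Conj (Atom 0) (Neg (Atom 0))" and s = "[False, True, False]"
        and p = "(1, 0)" and q = "(2, 2)"]) code_simp+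

lemma not_entails_Conj_commute: "\<not> entails (Conj (Atom 0) (Atom 1)) (Conj (Atom 1) (Atom 0))"
  by (rule not_entails_by_Xor_seed[where s = "[False, False, False, False, True, False]"]) code_simp+

lemma not_entails_Conj_assoc:
  "\<not> entails (Conj (Atom 0) (Conj (Atom 1) (Atom 2))) (Conj (Conj (Atom 0) (Atom 1)) (Atom 2))"
  by (rule not_entails_by_Xor_seed[where s = "replicate 8 False @ [True, False]"]) code_simp+

lemma not_entails_Conj_assoc':
  "\<not> entails (Conj (Conj (Atom 0) (Atom 1)) (Atom 2)) (Conj (Atom 0) (Conj (Atom 1) (Atom 2)))"
  by (rule not_entails_by_Xor_seed[where s = "replicate 7 False @ [True, False, False]"]) code_simp+

lemma not_entails_Conj_Disj_distrib:
  "\<not> entails (Conj (Atom 0) (Disj (Atom 1) (Atom 2)))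
     (Disj (Conj (Atom 0) (Atom 1)) (Conj (Atom 0) (Atom 2)))"
  by (rule not_entails_by_Xor_seed[where s = "replicate 6 False @ [True, False, False, True, False, False]"])
    code_simp+

lemma not_entails_Conj_Disj_distrib':
  "\<not> entails (Disj (Conj (Atom 0) (Atom 1)) (Conj (Atom 0) (Atom 2)))
     (Conj (Atom 0) (Disj (Atom 1) (Atom 2)))"
  by (rule not_entails_by_Xor_seed[where s = "replicate 8 False @ [True, True, False, False]"]) code_simp+

lemma not_entails_Xor_commute: "\<not> entails (Xor (Atom 0) (Atom 1)) (Xor (Atom 1) (Atom 0))"
  by (rule not_entails_by_Xor_seed[where s = "[False, True, False, False]"]) code_simp+

lemma not_entails_Xor_Disj: "\<not> entails (Xor (Atom 0) (Atom 1)) (Disj (Atom 0) (Atom 1))"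
  by (rule not_entails_by_Xor_seed[where s = "[False, True, False, False, False]"]) code_simp+

lemma not_entails_Xor_Disj_Neg: "\<not> entails (Xor (Atom 0) (Atom 1)) (Disj (Neg (Atom 0)) (Neg (Atom 1)))"
  by (rule not_entails_by_Xor_seed[where s = "[False, True, False, False, False]"]) code_simp+

theorem theorem5p2:
  shows "(\<exists>\<alpha>. \<not> entails \<alpha> (Conj \<alpha> \<alpha>)) \<and>
    (\<exists>\<alpha> \<beta>. \<not> entails (Conj \<alpha> \<beta>) (Conj \<beta> \<alpha>)) \<and>
    (\<exists>\<alpha> \<beta> \<delta>. \<not> entails (Conj \<alpha> (Conj \<beta> \<delta>)) (Conj (Conj \<alpha> \<beta>) \<delta>)) \<and>
    (\<exists>\<alpha> \<beta> \<delta>. \<not> entails (Conj (Conj \<alpha> \<beta>) \<delta>) (Conj \<alpha> (Conj \<beta> \<delta>))) \<and>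
    (\<exists>\<alpha> \<beta> \<delta>. \<not> entails (Conj \<alpha> (Disj \<beta> \<delta>)) (Disj (Conj \<alpha> \<beta>) (Conj \<alpha> \<delta>))) \<and>
    (\<exists>\<alpha> \<beta> \<delta>. \<not> entails (Disj (Conj \<alpha> \<beta>) (Conj \<alpha> \<delta>)) (Conj \<alpha> (Disj \<beta> \<delta>))) \<and>
    \<not> (\<forall>\<alpha> \<beta> \<delta>. entails \<delta> \<alpha> \<and> entails \<delta> \<beta> \<longrightarrow> entails \<delta> (Conj \<alpha> \<beta>)) \<and>
    (\<exists>\<alpha> \<beta>. \<not> entails (Conj \<alpha> (Neg \<alpha>)) \<beta>) \<and>
    (\<exists>\<alpha> \<beta>. \<not> entails (Xor \<alpha> \<beta>) (Xor \<beta> \<alpha>)) \<and>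
    (\<exists>\<alpha> \<beta>. \<not> entails (Xor \<alpha> \<beta>) (Disj \<alpha> \<beta>) \<and> \<not> entails (Xor \<alpha> \<beta>) (Disj (Neg \<alpha>) (Neg \<beta>)))"
  using not_entails_Conj_idem not_entails_Conj_commute not_entails_Conj_assoc not_entails_Conj_assoc'
    not_entails_Conj_Disj_distrib not_entails_Conj_Disj_distrib' not_entails_Conj_Neg_Fa
    not_entails_Xor_commute not_entails_Xor_Disj not_entails_Xor_Disj_Neg entails_refl[of "Atom 0"]
  by blast

end
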